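(* Under the setting and additional assumptions below, the local copies generated by SONATA are asymptotically consensual: for all $i=1,\dots,I$, $\lim_{k\to\infty}\|\mathbf{x}_{(i)}^k-\bar{\mathbf{x}}_\phi^k\|=0$; moreover $\sum_{k=0}^\infty\gamma^k\|\mathbf{x}_{(i)}^k-\bar{\mathbf{x}}_\phi^k\|<\infty$ and $\sum_{k=0}^\infty\|\mathbf{x}_{(i)}^k-\bar{\mathbf{x}}_\phi^k\|^2<\infty$.
   Context: Problem: minimize $V(\mathbf{x})\triangleq F(\mathbf{x})+G(\mathbf{x})$, $F=\sum_{i=1}^If_i$, over $\mathbf{x}\in X$, where $X\subseteq\mathbb{R}^m$ is nonempty closed convex; each $f_i:O\to\mathbb{R}$ is $C^1$ on an open set $O\supseteq X$ with $\nabla f_i$ $L_i$-Lipschitz on $X$; $G:O\to\mathbb{R}$ is convex; $V$ is bounded below on $X$. Additional assumptions: $\|\nabla F(\mathbf{x})\|\le L_F<\infty$ and all subgradients of $G$ at $\mathbf{x}$ have norm $\le L_G<\infty$, for all $\mathbf{x}\in X$; step-sizes $\gamma^k\in(0,1]$ with $\sum_k\gamma^k=\infty$, $\sum_k(\gamma^k)^2<\infty$. Network: digraphs $G^k=(\{1,\dots,I\},E^k)$, $(j,i)\in E^k$ meaning $j$ can send to $i$, $B$-strongly connected ($\bigcup_{t=k}^{k+B-1}E^t$ strongly connected for every $k$). $\mathbf{A}^k=(a_{ij}^k)$: $a_{ij}^k=0$ if $j\ne i$ and $(j,i)\notin E^k$, $a_{ij}^k\ge\kappa$ if $(j,i)\in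 E^k$, $a_{ii}^k\ge\kappa$ ($\kappa>0$), nonnegative with $\mathbf{1}^T\mathbf{A}^k=\mathbf{1}^T$. Assumption III.14 on $\widetilde f_i:O\times O\to\mathbb{R}$: $\widetilde f_i(\cdot|\mathbf{x})$ is $\tau_i$-strongly convex on $X$ for all $\mathbf{x}\in X$; $C^1$ on $O$ with $\nabla\widetilde f_i(\mathbf{x}|\mathbf{x})=\nabla f_i(\mathbf{x})$; $\nabla\widetilde f_i(\mathbf{x}|\cdot)$ is $\widetilde L_i$-Lipschitz on $X$. SONATA: initialize $\mathbf{x}_{(i)}^0\in X$, $\phi_{(i)}^0=1$, $\mathbf{y}_{(i)}^0=\nabla f_i(\mathbf{x}_{(i)}^0)$; at iteration $k$, $\widetilde{\mathbf{x}}_i^k=\operatorname{argmin}_{\mathbf{x}\in X}\{\widetilde f_i(\mathbf{x}|\mathbf{x}_{(i)}^k)+(I\mathbf{y}_{(i)}^k-\nabla f_i(\mathbf{x}_{(i)}^k))^T(\mathbf{x}-\mathbf{x}_{(i)}^k)+G(\mathbf{x})\}$, $\mathbf{x}_{(i)}^{k+1/2}=\mathbf{x}_{(i)}^k+\gamma^k(\widetilde{\mathbf{x}}_i^k-\mathbf{x}_{(i)}^k)$, $\phi_{(i)}^{k+1}=\sum_ja_{ij}^k\phi_{(j)}^k$, $\mathbf{x}_{(i)}^{k+1}=\frac{1}{\phi_{(i)}^{k+1}}\sum_ja_{ij}^k\phi_{(j)}^k\mathbf{x}_{(j)}^{k+1/2}$, $\mathbf{y}_{(i)}^{k+1}=\frac{1}{\phi_{(i)}^{k+1}}\sum_ja_{ij}^k\phi_{(j)}^k\mathbf{y}_{(j)}^k+\frac{1}{\phi_{(i)}^{k+1}}(\nabla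 f_i(\mathbf{x}_{(i)}^{k+1})-\nabla f_i(\mathbf{x}_{(i)}^k))$. $\bar{\mathbf{x}}_\phi^k\triangleq\frac1I\sum_j\phi_{(j)}^k\mathbf{x}_{(j)}^k$. *)

theory Defs
  imports "HOL-Analysis.Analysis"
begin

definition strongly_convex_on :: "real \<Rightarrow> 'a::real_inner set \<Rightarrow> ('a \<Rightarrow> real) \<Rightarrow> bool" where
  "strongly_convex_on tau S f \<longleftrightarrow>
     (\<forall>x\<in>S. \<forall>y\<in>S. \<forall>t::real. 0 \<le> t \<and> t \<le> 1 \<longrightarrow>
        f (t *\<^sub>R x + (1 - t) *\<^sub>R y) \<le> t * f x + (1 - t) * f y - tau / 2 * t * (1 - t) * (norm (x - y))\<^sup>2)"

definition is_subgradient :: "'a set \<Rightarrow> ('a::real_inner \<Rightarrow> real) \<Rightarrow> 'a \<Rightarrow> 'a \<Rightarrow> bool" where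
  "is_subgradient U G x g \<longleftrightarrow> (\<forall>z\<in>U. G z \<ge> G x + inner g (z - x))"

definition strongly_connected_on :: "nat \<Rightarrow> (nat \<times> nat) set \<Rightarrow> bool" where
  "strongly_connected_on n E \<longleftrightarrow> (\<forall>i<n. \<forall>j<n. (i, j) \<in> (E \<inter> ({..<n} \<times> {..<n}))\<^sup>*)"

end

theory Submission
  imports Defs
begin

text \<open>Dividing by the push-sum weights \<phi> turns the column-stochastic mixing into the
  row-stochastic weights \<open>A k i j * \<phi> k j / \<phi> (k + 1) i\<close>. The weights \<phi> stay above
  \<open>\<kappa> ^ (I * B)\<close>, so by B-strong connectivity every product of \<open>I * B\<close> consecutive mixing
  matrices has all entries at least some \<open>\<eta> > 0\<close> and contracts the diameter of the agents'
  copies by the factor \<open>1 - \<eta>\<close>. Hence the diameters of the copies x and of the trackers y are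
  bounded by geometric convolutions of their perturbations: \<open>\<gamma> k\<close> times the local steps
  \<open>norm (xt k i - x k i)\<close> for x, and the gradient increments for y. Strong convexity of the
  surrogates bounds the local steps linearly in \<open>norm (y k i)\<close>, which by gradient tracking is
  at most the diameter of y plus \<open>L_F\<close> plus a multiple of the diameter of x. As \<open>\<gamma> k \<rightarrow> 0\<close>,
  a small-gain argument bounds the local steps, and then the consensus error is at most
  \<open>a * \<rho> ^ k + b * (\<Sum>t<k. \<rho> ^ (k - 1 - t) * \<gamma> t)\<close> with \<open>\<rho> < 1\<close>; since
  \<open>\<Sum>k. (\<gamma> k)\<^sup>2 < \<infinity>\<close>, such a bound tends to 0 and is square-summable and
  \<gamma>-summable.\<close>

section \<open>Geometric convolutions\<close>

lemma geometric_sum_le: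
  fixes \<rho> :: real
  assumes "0 \<le> \<rho>" "\<rho> < 1"
  shows "(\<Sum>j<n. \<rho>^j) \<le> 1 / (1 - \<rho>)"
proof -
  have "(\<Sum>j<n. \<rho>^j) = (1 - \<rho>^n) / (1 - \<rho>)"
    using assms by (simp add: sum_gp_strict)
  also have "\<dots> \<le> 1 / (1 - \<rho>)"
    using assms by (simp add: divide_right_mono)
  finally show ?thesis .
qed

lemma geometric_sum_rev_le:
  fixes \<rho> :: real
  assumes "0 \<le> \<rho>" "\<rho> < 1"
  shows "(\<Sum>t<k. \<rho>^(k - Suc t)) \<le> 1 / (1 - \<rho>)"
  using geometric_sum_le[OF assms, of k] by (simp add: sum.nat_diff_reindex)

lemma weighted_Cauchy_Schwarz_sum:
  fixes w a :: "'i \<Rightarrow> real"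
  assumes "\<And>i. i \<in> A \<Longrightarrow> 0 \<le> w i"
  shows "(\<Sum>i\<in>A. w i * a i)\<^sup>2 \<le> (\<Sum>i\<in>A. w i) * (\<Sum>i\<in>A. w i * (a i)\<^sup>2)"
proof -
  have "(\<Sum>i\<in>A. w i * a i) = (\<Sum>i\<in>A. sqrt (w i) * (sqrt (w i) * a i))"
    using assms by (intro sum.cong) (auto simp: mult.assoc[symmetric])
  then show ?thesis
    using Cauchy_Schwarz_ineq_sum[of "\<lambda>i. sqrt (w i)" "\<lambda>i. sqrt (w i) * a i" A] assms
    by (simp add: power_mult_distrib)
qed

lemma geometric_convolution_square_le:
  fixes \<rho> :: real and c :: "nat \<Rightarrow> real"
  assumes "0 \<le> \<rho>" "\<rho> < 1"
  shows "(\<Sum>t<k. \<rho>^(k - Suc t) * c t)\<^sup>2 \<le> (\<Sum>t<k. \<rho>^(k - Suc t) * (c t)\<^sup>2) / (1 - \<rho>)"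
proof -
  have "(\<Sum>t<k. \<rho>^(k - Suc t) * c t)\<^sup>2 \<le> (\<Sum>t<k. \<rho>^(k - Suc t)) * (\<Sum>t<k. \<rho>^(k - Suc t) * (c t)\<^sup>2)"
    using assms by (intro weighted_Cauchy_Schwarz_sum) auto
  also have "\<dots> \<le> 1 / (1 - \<rho>) * (\<Sum>t<k. \<rho>^(k - Suc t) * (c t)\<^sup>2)"
    using assms geometric_sum_rev_le[OF assms, of k]
    by (intro mult_right_mono sum_nonneg) auto
  finally show ?thesis by simp
qed

lemma summable_geometric_convolution:
  fixes \<rho> :: real and c :: "nat \<Rightarrow> real"
  assumes "0 \<le> \<rho>" "\<rho> < 1" "summable (\<lambda>t. \<bar>c t\<bar>)"
  shows "summable (\<lambda>k. \<Sum>t<k. \<rho>^(k - Suc t) * c t)"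
proof -
  have "summable (\<lambda>k. norm (\<rho>^k))"
    using assms by (simp add: summable_geometric)
  then have "summable (\<lambda>k. \<Sum>t\<le>k. c t * \<rho>^(k - t))"
    using assms by (intro summable_Cauchy_product) simp_all
  then show ?thesis
    by (subst summable_Suc_iff[symmetric]) (simp add: lessThan_Suc_atMost mult.commute)
qed

lemma summable_of_geometric_convolution_bound:
  fixes \<rho> a b :: real and \<gamma> d :: "nat \<Rightarrow> real"
  assumes "0 \<le> \<rho>" "\<rho> < 1" "0 \<le> a" "0 \<le> b"
    and \<gamma>_nonneg: "\<And>k. 0 \<le> \<gamma> k" and \<gamma>_sq: "summable (\<lambda>k. (\<gamma> k)\<^sup>2)"
    and d_nonneg: "\<And>k. 0 \<le> d k"
    and d_le: "\<And>k. d k \<le> a * \<rho>^k + b * (\<Sum>t<k. \<rho>^(k - Suc t) * \<gamma> t)"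
  shows "d \<longlonglongrightarrow> 0" "summable (\<lambda>k. \<gamma> k * d k)" "summable (\<lambda>k. (d k)\<^sup>2)"
proof -
  define cv where "cv k = (\<Sum>t<k. \<rho>^(k - Suc t) * \<gamma> t)" for k
  define cv2 where "cv2 k = (\<Sum>t<k. \<rho>^(k - Suc t) * (\<gamma> t)\<^sup>2)" for k
  have d_sq_le: "(d k)\<^sup>2 \<le> 2 * a\<^sup>2 * (\<rho>\<^sup>2)^k + 2 * b\<^sup>2 * (cv2 k / (1 - \<rho>))" for k
  proof -
    have "0 \<le> cv k"
      unfolding cv_def using assms by (intro sum_nonneg mult_nonneg_nonneg) auto
    then have "(d k)\<^sup>2 \<le> (a * \<rho>^k + b * cv k)\<^sup>2"
      using d_le[of k] d_nonneg[of k] unfolding cv_def by (intro power_mono) auto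
    also have "\<dots> \<le> 2 * (a * \<rho>^k)\<^sup>2 + 2 * (b * cv k)\<^sup>2"
      using sum_squares_bound[of "a * \<rho>^k" "b * cv k"] by (simp add: power2_sum)
    also have "\<dots> = 2 * a\<^sup>2 * (\<rho>\<^sup>2)^k + 2 * (b\<^sup>2 * (cv k)\<^sup>2)"
      by (simp add: power_mult_distrib flip: power_mult, simp add: mult.commute)
    also have "\<dots> \<le> 2 * a\<^sup>2 * (\<rho>\<^sup>2)^k + 2 * (b\<^sup>2 * (cv2 k / (1 - \<rho>)))"
      using geometric_convolution_square_le[OF assms(1,2), of k \<gamma>]
      unfolding cv_def cv2_def by (intro add_left_mono mult_left_mono) auto
    finally show ?thesis by simp
  qed
  have "summable cv2"
    unfolding cv2_def using assms by (intro summable_geometric_convolution) auto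
  moreover have "summable (\<lambda>k. (\<rho>\<^sup>2)^k)"
    using assms by (intro summable_geometric) (simp add: abs_square_less_1)
  ultimately have "summable (\<lambda>k. 2 * a\<^sup>2 * (\<rho>\<^sup>2)^k + 2 * b\<^sup>2 * (cv2 k / (1 - \<rho>)))"
    by (intro summable_add summable_mult summable_divide)
  then show sq: "summable (\<lambda>k. (d k)\<^sup>2)"
    by (rule summable_comparison_test'[where N = 0]) (use d_sq_le in simp)
  have "(\<lambda>k. sqrt ((d k)\<^sup>2)) \<longlonglongrightarrow> sqrt 0"
    by (intro tendsto_real_sqrt summable_LIMSEQ_zero[OF sq])
  then show "d \<longlonglongrightarrow> 0"
    using d_nonneg by simp
  have prod_le: "\<gamma> k * d k \<le> ((\<gamma> k)\<^sup>2 + (d k)\<^sup>2) / 2" for k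
    using sum_squares_bound[of "\<gamma> k" "d k"] by simp
  have "summable (\<lambda>k. ((\<gamma> k)\<^sup>2 + (d k)\<^sup>2) / 2)"
    by (intro summable_divide summable_add \<gamma>_sq sq)
  then show "summable (\<lambda>k. \<gamma> k * d k)"
    by (rule summable_comparison_test'[where N = 0])
      (use prod_le \<gamma>_nonneg d_nonneg in \<open>simp add: abs_mult\<close>)
qed

lemma geometric_convolution_split:
  fixes \<rho> :: real and \<epsilon> :: "nat \<Rightarrow> real"
  shows "(\<Sum>t<m + T. \<rho>^(m + T - Suc t) * \<epsilon> t)
    = \<rho>^T * (\<Sum>t<m. \<rho>^(m - Suc t) * \<epsilon> t) + (\<Sum>t\<in>{m..<m + T}. \<rho>^(m + T - Suc t) * \<epsilon> t)"
proof -
  have "\<rho>^(m + T - Suc t) = \<rho>^T * \<rho>^(m - Suc t)" if "t < m" for t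
  proof -
    have "m + T - Suc t = (m - Suc t) + T"
      using that by simp
    then show ?thesis
      by (simp add: power_add)
  qed
  then have "(\<Sum>t<m. \<rho>^(m + T - Suc t) * \<epsilon> t) = \<rho>^T * (\<Sum>t<m. \<rho>^(m - Suc t) * \<epsilon> t)"
    by (simp add: sum_distrib_left mult.assoc)
  then show ?thesis
    using sum.atLeastLessThan_concat[of 0 m "m + T" "\<lambda>t. \<rho>^(m + T - Suc t) * \<epsilon> t"]
    by (simp add: atLeast0LessThan)
qed

lemma geometric_window_bound:
  fixes D \<epsilon> :: "nat \<Rightarrow> real" and q \<rho> :: real and T :: nat
  assumes "0 < T" "0 < \<rho>" "\<rho> \<le> 1" and q: "\<rho>^T = q"
    and D_nonneg: "\<And>k. 0 \<le> D k" and \<epsilon>_nonneg: "\<And>k. 0 \<le> \<epsilon> k"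
    and step: "\<And>k. D (Suc k) \<le> D k + 2 * \<epsilon> k"
    and window: "\<And>k. D (k + T) \<le> q * D k + 2 * (\<Sum>t\<in>{k..<k + T}. \<epsilon> t)"
  shows "D k \<le> (\<rho>^k / q) * D 0 + (2 / q) * (\<Sum>t<k. \<rho>^(k - Suc t) * \<epsilon> t)"
proof (induction k rule: less_induct)
  case (less k)
  have "0 < q"
    using q \<open>0 < \<rho>\<close> by auto
  have scaled: "c \<le> \<rho>^m / q * c" if "m \<le> T" "0 \<le> c" for m c
  proof -
    have "1 \<le> \<rho>^m / q"
      using q power_decreasing[OF that(1), of \<rho>] assms \<open>0 < q\<close> by simp
    then show ?thesis
      using mult_right_mono[OF _ that(2)] by fastforce
  qed
  show ?case
  proof (cases "k < T")
    case True
    have "D n \<le> D 0 + 2 * (\<Sum>t<n. \<epsilon> t)" for n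
    proof (induction n)
      case (Suc n)
      then show ?case
        using step[of n] by simp
    qed simp
    also have "D 0 + 2 * (\<Sum>t<k. \<epsilon> t) \<le> \<rho>^k / q * D 0 + 2 * (\<Sum>t<k. \<rho>^(k - Suc t) / q * \<epsilon> t)"
      using True by (intro add_mono mult_left_mono sum_mono scaled D_nonneg \<epsilon>_nonneg) auto
    finally show ?thesis
      by (simp add: sum_distrib_left sum_divide_distrib)
  next
    case False
    define m where "m = k - T"
    have k: "k = m + T" and "m < k"
      using False \<open>0 < T\<close> unfolding m_def by auto
    have split: "(\<Sum>t<k. \<rho>^(k - Suc t) * \<epsilon> t)
        = q * (\<Sum>t<m. \<rho>^(m - Suc t) * \<epsilon> t) + (\<Sum>t\<in>{m..<k}. \<rho>^(k - Suc t) * \<epsilon> t)"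
      unfolding k q[symmetric] by (rule geometric_convolution_split)
    have "D k \<le> q * D m + 2 * (\<Sum>t\<in>{m..<k}. \<epsilon> t)"
      using window[of m] k by simp
    also have "\<dots> \<le> q * ((\<rho>^m / q) * D 0 + (2 / q) * (\<Sum>t<m. \<rho>^(m - Suc t) * \<epsilon> t))
        + 2 * (\<Sum>t\<in>{m..<k}. \<rho>^(k - Suc t) / q * \<epsilon> t)"
      using less.IH[OF \<open>m < k\<close>] \<open>0 < q\<close> k
      by (intro add_mono mult_left_mono sum_mono scaled \<epsilon>_nonneg) auto
    also have "\<dots> = (\<rho>^m * q / q) * D 0
        + (2 / q) * (q * (\<Sum>t<m. \<rho>^(m - Suc t) * \<epsilon> t) + (\<Sum>t\<in>{m..<k}. \<rho>^(k - Suc t) * \<epsilon> t))"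
      using \<open>0 < q\<close> by (simp add: sum_divide_distrib[symmetric] field_simps)
    also have "\<dots> = (\<rho>^k / q) * D 0 + (2 / q) * (\<Sum>t<k. \<rho>^(k - Suc t) * \<epsilon> t)"
      unfolding split by (simp add: k power_add q)
    finally show ?thesis .
  qed
qed

lemma geometric_convolution_le_split:
  fixes \<rho> e B :: real and \<gamma> M :: "nat \<Rightarrow> real"
  assumes "0 \<le> \<rho>" "\<rho> < 1" "0 \<le> e" "0 \<le> B"
    and "\<And>s. 0 \<le> \<gamma> s" "\<And>s. 0 \<le> M s"
    and small: "\<And>s. K \<le> s \<Longrightarrow> \<gamma> s \<le> e" and bounded: "\<And>s. s < t \<Longrightarrow> M s \<le> B"
  shows "(\<Sum>s<t. \<rho>^(t - Suc s) * (\<gamma> s * M s)) \<le> (\<Sum>s<K. \<gamma> s * M s) + e * B / (1 - \<rho>)"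
proof -
  have "(\<Sum>s<t. \<rho>^(t - Suc s) * (\<gamma> s * M s))
      \<le> (\<Sum>s<t. (if s < K then \<gamma> s * M s else 0) + e * B * \<rho>^(t - Suc s))"
  proof (rule sum_mono)
    fix s assume "s \<in> {..<t}"
    have "0 \<le> \<rho>^(t - Suc s)" "0 \<le> \<gamma> s * M s"
      using assms by simp_all
    show "\<rho>^(t - Suc s) * (\<gamma> s * M s) \<le> (if s < K then \<gamma> s * M s else 0) + e * B * \<rho>^(t - Suc s)"
    proof (cases "s < K")
      case True
      have "\<rho>^(t - Suc s) * (\<gamma> s * M s) \<le> 1 * (\<gamma> s * M s)"
        using assms(1,2) \<open>0 \<le> \<gamma> s * M s\<close> by (intro mult_right_mono) (simp_all add: power_le_one)
      moreover have "0 \<le> e * B * \<rho>^(t - Suc s)"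
        using assms(1,3,4) by simp
      ultimately show ?thesis
        using True by simp
    next
      case False
      then have "\<gamma> s * M s \<le> e * B"
        using \<open>s \<in> {..<t}\<close> assms by (intro mult_mono) auto
      then show ?thesis
        using False mult_right_mono[OF _ \<open>0 \<le> \<rho>^(t - Suc s)\<close>] by (simp add: mult.commute)
    qed
  qed
  also have "\<dots> = (\<Sum>s<t. if s < K then \<gamma> s * M s else 0) + e * B * (\<Sum>s<t. \<rho>^(t - Suc s))"
    by (simp add: sum.distrib sum_distrib_left)
  also have "\<dots> \<le> (\<Sum>s<K. \<gamma> s * M s) + e * B / (1 - \<rho>)"
  proof (rule add_mono)
    have "(\<Sum>s<t. if s < K then \<gamma> s * M s else 0) = (\<Sum>s\<in>{..<t} \<inter> {..<K}. \<gamma> s * M s)"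
      by (simp add: sum.inter_restrict)
    also have "\<dots> \<le> (\<Sum>s<K. \<gamma> s * M s)"
      using assms(5,6) by (intro sum_mono2) auto
    finally show "(\<Sum>s<t. if s < K then \<gamma> s * M s else 0) \<le> (\<Sum>s<K. \<gamma> s * M s)" .
    show "e * B * (\<Sum>s<t. \<rho>^(t - Suc s)) \<le> e * B / (1 - \<rho>)"
      using geometric_sum_rev_le[OF assms(1,2), of t] assms(3,4)
      by (metis mult_left_mono times_divide_eq_right mult_1_right mult_nonneg_nonneg)
  qed
  finally show ?thesis .
qed

lemma small_gain_step:
  fixes Dx Dy M \<gamma> :: "nat \<Rightarrow> real" and C c a0 a1 a2 \<rho> e B :: real
  assumes "0 \<le> \<rho>" "\<rho> < 1" "0 \<le> C" "0 \<le> c" "0 \<le> a1" "0 \<le> a2" "0 \<le> e" "0 \<le> B"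
    and "\<And>k. 0 \<le> Dx k" "\<And>k. 0 \<le> M k" "\<And>k. 0 \<le> \<gamma> k"
    and hx: "\<And>k. Dx k \<le> C * Dx 0 + C * (\<Sum>t<k. \<rho>^(k - Suc t) * (\<gamma> t * M t))"
    and hy: "\<And>k. Dy k \<le> C * Dy 0 + C * c * (\<Sum>t<k. \<rho>^(k - Suc t) * (Dx t + \<gamma> t * M t))"
    and hm: "\<And>k. M k \<le> a0 + a1 * Dy k + a2 * Dx k"
    and small: "\<And>t. K \<le> t \<Longrightarrow> \<gamma> t \<le> e" and bounded: "\<And>t. t < k \<Longrightarrow> M t \<le> B"
  defines "S \<equiv> \<Sum>t<K. \<gamma> t * M t" and "G \<equiv> 1 / (1 - \<rho>)"
  shows "M k \<le> a0 + a1 * (C * Dy 0 + C * c * ((C * Dx 0 + C * S) * G + S)) + a2 * (C * Dx 0 + C * S)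
    + e * (a1 * C * c * (C * G * G + G) + a2 * C * G) * B"
proof -
  have "0 \<le> G"
    using assms(2) unfolding G_def by simp
  have conv: "(\<Sum>s<t. \<rho>^(t - Suc s) * (\<gamma> s * M s)) \<le> S + e * B * G" if "t \<le> k" for t
  proof -
    have "(\<Sum>s<t. \<rho>^(t - Suc s) * (\<gamma> s * M s)) \<le> S + e * B / (1 - \<rho>)"
      unfolding S_def using that bounded
      by (intro geometric_convolution_le_split[OF assms(1,2,7,8,11,10) small]) auto
    then show ?thesis
      unfolding G_def by simp
  qed
  define Xs where "Xs = C * Dx 0 + C * (S + e * B * G)"
  have Dx_le: "Dx t \<le> Xs" if "t \<le> k" for t
    using hx[of t] mult_left_mono[OF conv[OF that] \<open>0 \<le> C\<close>] unfolding Xs_def by linarith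
  have "(\<Sum>t<k. \<rho>^(k - Suc t) * (Dx t + \<gamma> t * M t))
      = (\<Sum>t<k. \<rho>^(k - Suc t) * Dx t) + (\<Sum>t<k. \<rho>^(k - Suc t) * (\<gamma> t * M t))"
    by (simp add: distrib_left sum.distrib)
  also have "(\<Sum>t<k. \<rho>^(k - Suc t) * Dx t) \<le> Xs * G"
  proof -
    have "(\<Sum>t<k. \<rho>^(k - Suc t) * Dx t) \<le> (\<Sum>t<k. \<rho>^(k - Suc t)) * Xs"
      unfolding sum_distrib_right using Dx_le assms(1) by (intro sum_mono mult_left_mono) auto
    also have "\<dots> \<le> G * Xs"
      using geometric_sum_rev_le[OF assms(1,2), of k] Dx_le[of 0] assms(9)[of 0]
      unfolding G_def by (intro mult_right_mono) auto
    finally show ?thesis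
      by (simp add: mult.commute)
  qed
  finally have "(\<Sum>t<k. \<rho>^(k - Suc t) * (Dx t + \<gamma> t * M t)) \<le> Xs * G + (S + e * B * G)"
    using conv[of k] by simp
  then have "C * c * (\<Sum>t<k. \<rho>^(k - Suc t) * (Dx t + \<gamma> t * M t)) \<le> C * c * (Xs * G + (S + e * B * G))"
    by (rule mult_left_mono) (simp add: assms(3,4))
  then have "a1 * Dy k \<le> a1 * (C * Dy 0 + C * c * (Xs * G + (S + e * B * G)))"
    using hy[of k] \<open>0 \<le> a1\<close> by (intro mult_left_mono) auto
  moreover have "a2 * Dx k \<le> a2 * Xs"
    using Dx_le[of k] \<open>0 \<le> a2\<close> by (intro mult_left_mono) auto
  ultimately have "M k \<le> a0 + a1 * (C * Dy 0 + C * c * (Xs * G + (S + e * B * G))) + a2 * Xs"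
    using hm[of k] by linarith
  then show ?thesis
    unfolding Xs_def by (simp add: algebra_simps)
qed

lemma small_gain_bounded:
  fixes Dx Dy M \<gamma> :: "nat \<Rightarrow> real" and C c a0 a1 a2 \<rho> :: real
  assumes "0 \<le> \<rho>" "\<rho> < 1" "0 \<le> C" "0 \<le> c" "0 \<le> a0" "0 \<le> a1" "0 \<le> a2"
    and "\<And>k. 0 \<le> Dx k" "\<And>k. 0 \<le> Dy k" "\<And>k. 0 \<le> M k" "\<And>k. 0 \<le> \<gamma> k"
    and "\<gamma> \<longlonglongrightarrow> 0"
    and hx: "\<And>k. Dx k \<le> C * Dx 0 + C * (\<Sum>t<k. \<rho>^(k - Suc t) * (\<gamma> t * M t))"
    and hy: "\<And>k. Dy k \<le> C * Dy 0 + C * c * (\<Sum>t<k. \<rho>^(k - Suc t) * (Dx t + \<gamma> t * M t))"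
    and hm: "\<And>k. M k \<le> a0 + a1 * Dy k + a2 * Dx k"
  shows "\<exists>B. \<forall>k. M k \<le> B"
proof -
  define G where "G = 1 / (1 - \<rho>)"
  define gain where "gain = a1 * C * c * (C * G * G + G) + a2 * C * G"
  have "0 \<le> gain"
    using assms(2-7) unfolding gain_def G_def by simp
  \<comment> \<open>once the step sizes are below e, the feedback gain e * gain is at most 1/2\<close>
  define e where "e = 1 / (2 * gain + 2)"
  have "0 < e" "e * gain \<le> 1 / 2"
    using \<open>0 \<le> gain\<close> unfolding e_def by (simp_all add: field_simps)
  obtain K where K: "\<And>t. K \<le> t \<Longrightarrow> \<gamma> t \<le> e"
    using order_tendstoD(2)[OF \<open>\<gamma> \<longlonglongrightarrow> 0\<close> \<open>0 < e\<close>] unfolding eventually_sequentially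
    by (meson less_imp_le)
  define S where "S = (\<Sum>t<K. \<gamma> t * M t)"
  define C0 where "C0 = a0 + a1 * (C * Dy 0 + C * c * ((C * Dx 0 + C * S) * G + S)) + a2 * (C * Dx 0 + C * S)"
  have "0 \<le> S"
    unfolding S_def using assms(10,11) by (simp add: sum_nonneg)
  then have "0 \<le> C0"
    unfolding C0_def G_def using assms(2-9) by simp
  define B where "B = 2 * C0 + (\<Sum>t<K. M t)"
  have "0 \<le> B"
    unfolding B_def using \<open>0 \<le> C0\<close> assms(10) by (simp add: sum_nonneg)
  have "M k \<le> B" for k
  proof (induction k rule: less_induct)
    case (less k)
    show ?case
    proof (cases "k < K")
      case True
      then have "M k \<le> (\<Sum>t<K. M t)"
        using assms(10) by (intro member_le_sum) auto
      then show ?thesis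
        unfolding B_def using \<open>0 \<le> C0\<close> by simp
    next
      case False
      have "M k \<le> C0 + e * gain * B"
        using small_gain_step[OF assms(1-4,6,7) less_imp_le[OF \<open>0 < e\<close>] \<open>0 \<le> B\<close> assms(8,10,11) hx hy hm K less.IH]
        unfolding C0_def S_def gain_def G_def by simp
      also have "\<dots> \<le> C0 + B / 2"
        using mult_right_mono[OF \<open>e * gain \<le> 1 / 2\<close> \<open>0 \<le> B\<close>] by simp
      also have "\<dots> \<le> B"
        unfolding B_def using assms(10) by (simp add: sum_nonneg)
      finally show ?thesis .
    qed
  qed
  then show ?thesis
    by blast
qed

section \<open>Consensus under stochastic mixing\<close>

lemma norm_diff_le_diameter_image:
  fixes r :: "nat \<Rightarrow> 'a::real_normed_vector"
  assumes "i < n" "j < n"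
  shows "norm (r i - r j) \<le> diameter (r ` {..<n})"
  using diameter_bounded_bound[of "r ` {..<n}" "r i" "r j"] assms
  by (simp add: dist_norm finite_imp_bounded)

lemma diameter_image_nonneg:
  fixes r :: "nat \<Rightarrow> 'a::metric_space"
  shows "0 \<le> diameter (r ` {..<n})"
  by (rule diameter_ge_0) (simp add: finite_imp_bounded)

lemma diameter_image_le:
  fixes r :: "nat \<Rightarrow> 'a::real_normed_vector"
  assumes "0 < n" "\<And>i j. i < n \<Longrightarrow> j < n \<Longrightarrow> norm (r i - r j) \<le> c"
  shows "diameter (r ` {..<n}) \<le> c"
  using assms by (intro diameter_le) auto

lemma diameter_image_add_le:
  fixes u e :: "nat \<Rightarrow> 'a::real_normed_vector"
  assumes "0 < n" "\<And>i. i < n \<Longrightarrow> norm (e i) \<le> c"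
  shows "diameter ((\<lambda>i. u i + e i) ` {..<n}) \<le> diameter (u ` {..<n}) + 2 * c"
proof (rule diameter_image_le[OF \<open>0 < n\<close>])
  fix i j assume "i < n" "j < n"
  have "norm (u i + e i - (u j + e j)) \<le> norm (u i - u j) + norm (e i) + norm (e j)"
    using norm_triangle_ineq[of "u i - u j" "e i - e j"] norm_triangle_ineq4[of "e i" "e j"]
    by (simp add: algebra_simps)
  also have "\<dots> \<le> diameter (u ` {..<n}) + c + c"
    using \<open>i < n\<close> \<open>j < n\<close> assms(2) by (intro add_mono norm_diff_le_diameter_image) auto
  finally show "norm (u i + e i - (u j + e j)) \<le> diameter (u ` {..<n}) + 2 * c"
    by simp
qed

lemma norm_convex_combination_le:
  fixes a :: "nat \<Rightarrow> 'a::real_normed_vector"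
  assumes "\<And>j. j < n \<Longrightarrow> 0 \<le> w j" "(\<Sum>j<n. w j) = 1" "\<And>j. j < n \<Longrightarrow> norm (a j) \<le> c"
  shows "norm (\<Sum>j<n. w j *\<^sub>R a j) \<le> c"
proof -
  have "norm (\<Sum>j<n. w j *\<^sub>R a j) \<le> (\<Sum>j<n. w j * c)"
    using assms by (intro order_trans[OF norm_sum] sum_mono) (auto intro: mult_left_mono)
  also have "\<dots> = c"
    using assms by (simp flip: sum_distrib_right)
  finally show ?thesis .
qed

lemma norm_diff_convex_combination_le_diameter:
  fixes r :: "nat \<Rightarrow> 'a::real_normed_vector"
  assumes "i < n" "\<And>j. j < n \<Longrightarrow> 0 \<le> w j" "(\<Sum>j<n. w j) = 1"
  shows "norm (r i - (\<Sum>j<n. w j *\<^sub>R r j)) \<le> diameter (r ` {..<n})"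
proof -
  have "r i - (\<Sum>j<n. w j *\<^sub>R r j) = (\<Sum>j<n. w j *\<^sub>R (r i - r j))"
    using assms(3) by (simp add: scaleR_diff_right sum_subtractf flip: scaleR_sum_left)
  also have "norm \<dots> \<le> diameter (r ` {..<n})"
    using assms by (intro norm_convex_combination_le norm_diff_le_diameter_image) auto
  finally show ?thesis .
qed

lemma norm_diff_sums_le_diameter:
  fixes r :: "nat \<Rightarrow> 'a::real_normed_vector"
  assumes a: "\<And>j. j < n \<Longrightarrow> 0 \<le> a j" and b: "\<And>j. j < n \<Longrightarrow> 0 \<le> b j"
    and sums: "(\<Sum>j<n. a j) = S" "(\<Sum>j<n. b j) = S"
  shows "norm ((\<Sum>j<n. a j *\<^sub>R r j) - (\<Sum>j<n. b j *\<^sub>R r j)) \<le> S * diameter (r ` {..<n})"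
proof (cases "S = 0")
  case True
  have "\<forall>j\<in>{..<n}. a j = 0" "\<forall>j\<in>{..<n}. b j = 0"
    using sums True a b by (subst sum_nonneg_eq_0_iff[symmetric]; simp)+
  then show ?thesis
    using True by simp
next
  case False
  then have "0 < S"
    using sums(1) a sum_nonneg[of "{..<n}" a] by fastforce
  \<comment> \<open>pair every mass of a with every mass of b\<close>
  have eq: "S *\<^sub>R ((\<Sum>j<n. a j *\<^sub>R r j) - (\<Sum>j<n. b j *\<^sub>R r j))
      = (\<Sum>j<n. \<Sum>l<n. (a j * b l) *\<^sub>R (r j - r l))"
  proof -
    have "S *\<^sub>R (\<Sum>j<n. a j *\<^sub>R r j) = (\<Sum>j<n. \<Sum>l<n. (a j * b l) *\<^sub>R r j)"
      unfolding sums(2)[symmetric]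
      by (simp add: scaleR_sum_right scaleR_sum_left[symmetric] sum_distrib_left mult.commute)
    moreover have "S *\<^sub>R (\<Sum>l<n. b l *\<^sub>R r l) = (\<Sum>j<n. \<Sum>l<n. (a j * b l) *\<^sub>R r l)"
      unfolding sums(1)[symmetric]
      by (subst sum.swap) (simp add: scaleR_sum_right scaleR_sum_left[symmetric] sum_distrib_left mult.commute)
    ultimately show ?thesis
      by (simp add: scaleR_diff_right sum_subtractf)
  qed
  have "S * norm ((\<Sum>j<n. a j *\<^sub>R r j) - (\<Sum>j<n. b j *\<^sub>R r j))
      = norm (\<Sum>j<n. \<Sum>l<n. (a j * b l) *\<^sub>R (r j - r l))"
    unfolding eq[symmetric] using \<open>0 < S\<close> by simp
  also have "\<dots> \<le> (\<Sum>j<n. \<Sum>l<n. norm ((a j * b l) *\<^sub>R (r j - r l)))"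
    by (rule order_trans[OF norm_sum sum_mono[OF norm_sum]])
  also have "\<dots> \<le> (\<Sum>j<n. \<Sum>l<n. (a j * b l) * diameter (r ` {..<n}))"
    using a b norm_diff_le_diameter_image[of _ n _ r]
    by (intro sum_mono) (simp add: mult_left_mono)
  also have "\<dots> = S * (S * diameter (r ` {..<n}))"
    by (simp add: sum_distrib_right[symmetric] sum_distrib_left[symmetric] sums mult_ac)
  finally show ?thesis
    using \<open>0 < S\<close> by simp
qed

lemma diameter_stochastic_image_le:
  fixes r :: "nat \<Rightarrow> 'a::real_normed_vector"
  assumes "0 < n" and Q_nonneg: "\<And>i j. i < n \<Longrightarrow> j < n \<Longrightarrow> 0 \<le> Q i j"
    and Q_rows: "\<And>i. i < n \<Longrightarrow> (\<Sum>j<n. Q i j) = 1"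
    and Q_ge: "\<And>i j. i < n \<Longrightarrow> j < n \<Longrightarrow> \<eta> \<le> Q i j" and "0 \<le> \<eta>"
  shows "diameter ((\<lambda>i. \<Sum>j<n. Q i j *\<^sub>R r j) ` {..<n}) \<le> (1 - \<eta>) * diameter (r ` {..<n})"
proof (rule diameter_image_le[OF \<open>0 < n\<close>])
  fix i i' assume "i < n" "i' < n"
  \<comment> \<open>the common mass \<eta> of the rows i and i' cancels in the difference\<close>
  define S where "S = 1 - real n * \<eta>"
  have "S \<le> 1 - \<eta>"
    using \<open>0 < n\<close> \<open>0 \<le> \<eta>\<close> mult_right_mono[of 1 "real n" \<eta>] unfolding S_def by simp
  have row: "(\<Sum>j<n. Q i j - \<eta>) = S" if "i < n" for i
    using Q_rows[OF that] unfolding S_def by (simp add: sum_subtractf)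
  have "norm ((\<Sum>j<n. Q i j *\<^sub>R r j) - (\<Sum>j<n. Q i' j *\<^sub>R r j))
      = norm ((\<Sum>j<n. (Q i j - \<eta>) *\<^sub>R r j) - (\<Sum>j<n. (Q i' j - \<eta>) *\<^sub>R r j))"
    by (simp add: scaleR_diff_left sum_subtractf)
  also have "\<dots> \<le> S * diameter (r ` {..<n})"
    using Q_ge \<open>i < n\<close> \<open>i' < n\<close> by (intro norm_diff_sums_le_diameter row) auto
  also have "\<dots> \<le> (1 - \<eta>) * diameter (r ` {..<n})"
    using \<open>S \<le> 1 - \<eta>\<close> by (intro mult_right_mono diameter_image_nonneg)
  finally show "norm ((\<Sum>j<n. Q i j *\<^sub>R r j) - (\<Sum>j<n. Q i' j *\<^sub>R r j))
      \<le> (1 - \<eta>) * diameter (r ` {..<n})" .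
qed

text \<open>\<open>transition n M s m i j\<close> is the entry \<open>(i, j)\<close> of the product
  \<open>M (s + m - 1) \<cdots> M (s + 1) M s\<close> of \<open>n \<times> n\<close> matrices.\<close>

fun transition :: "nat \<Rightarrow> (nat \<Rightarrow> nat \<Rightarrow> nat \<Rightarrow> real) \<Rightarrow> nat \<Rightarrow> nat \<Rightarrow> nat \<Rightarrow> nat \<Rightarrow> real" where
  "transition n M s 0 i j = (if i = j then 1 else 0)"
| "transition n M s (Suc m) i j = (\<Sum>l<n. M (s + m) i l * transition n M s m l j)"

lemma linear_recursion_transition:
  fixes v :: "nat \<Rightarrow> nat \<Rightarrow> 'a::real_vector"
  assumes rec: "\<And>m i. i < n \<Longrightarrow> v (Suc m) i = (\<Sum>j<n. M (s + m) i j *\<^sub>R v m j)"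
    and "i < n"
  shows "v m i = (\<Sum>j<n. transition n M s m i j *\<^sub>R v 0 j)"
  using \<open>i < n\<close>
proof (induction m arbitrary: i)
  case 0
  then show ?case
    by (simp add: if_distrib[of "\<lambda>a. a *\<^sub>R _"] cong: if_cong)
next
  case (Suc m)
  have "v (Suc m) i = (\<Sum>l<n. M (s + m) i l *\<^sub>R (\<Sum>j<n. transition n M s m l j *\<^sub>R v 0 j))"
    using rec[OF Suc.prems] Suc.IH by simp
  also have "\<dots> = (\<Sum>j<n. \<Sum>l<n. (M (s + m) i l * transition n M s m l j) *\<^sub>R v 0 j)"
    by (simp add: scaleR_sum_right) (rule sum.swap)
  also have "\<dots> = (\<Sum>j<n. transition n M s (Suc m) i j *\<^sub>R v 0 j)"
    by (simp add: scaleR_sum_left)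
  finally show ?case .
qed

lemma transition_nonneg:
  assumes "\<And>t i j. i < n \<Longrightarrow> j < n \<Longrightarrow> 0 \<le> M t i j" "i < n" "j < n"
  shows "0 \<le> transition n M s m i j"
  using assms(2) by (induction m arbitrary: i) (auto intro!: sum_nonneg mult_nonneg_nonneg assms(1,3))

lemma transition_row_sum:
  assumes "\<And>t i. i < n \<Longrightarrow> (\<Sum>j<n. M t i j) = 1" "i < n"
  shows "(\<Sum>j<n. transition n M s m i j) = 1"
  using assms(2)
proof (induction m arbitrary: i)
  case (Suc m)
  have "(\<Sum>j<n. transition n M s (Suc m) i j) = (\<Sum>l<n. M (s + m) i l * (\<Sum>j<n. transition n M s m l j))"
    by (simp add: sum_distrib_left) (rule sum.swap)
  then show ?case
    using Suc assms(1) by simp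
qed simp

text \<open>\<open>reach n E s j m\<close>: the nodes reached from \<open>j\<close> along the time-varying digraph with
  edge sets \<open>E s, \<dots>, E (s + m - 1)\<close>, where a node may also wait.\<close>

fun reach :: "nat \<Rightarrow> (nat \<Rightarrow> (nat \<times> nat) set) \<Rightarrow> nat \<Rightarrow> nat \<Rightarrow> nat \<Rightarrow> nat set" where
  "reach n E s j 0 = {j}"
| "reach n E s j (Suc m) = reach n E s j m \<union> {i. i < n \<and> (\<exists>l\<in>reach n E s j m. (l, i) \<in> E (s + m))}"

lemma reach_subset: "j < n \<Longrightarrow> reach n E s j m \<subseteq> {..<n}"
  by (induction m) auto

lemma reach_mono: "m \<le> m' \<Longrightarrow> reach n E s j m \<subseteq> reach n E s j m'"
  by (induction m' rule: dec_induct) auto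

lemma transition_ge_power_on_reach:
  assumes M_nonneg: "\<And>t i j. i < n \<Longrightarrow> j < n \<Longrightarrow> 0 \<le> M t i j"
    and M_diag: "\<And>t i. i < n \<Longrightarrow> \<beta> \<le> M t i i"
    and M_edge: "\<And>t i l. i < n \<Longrightarrow> l < n \<Longrightarrow> (l, i) \<in> E t \<Longrightarrow> \<beta> \<le> M t i l"
    and "0 \<le> \<beta>" "j < n" "i \<in> reach n E s j m"
  shows "\<beta>^m \<le> transition n M s m i j"
  using assms(6)
proof (induction m arbitrary: i)
  case (Suc m)
  have "i < n"
    using Suc.prems reach_subset[OF \<open>j < n\<close>, of E s "Suc m"] by auto
  obtain l where l: "l < n" "l \<in> reach n E s j m" "\<beta> \<le> M (s + m) i l"
    using Suc.prems M_diag[OF \<open>i < n\<close>] M_edge[OF \<open>i < n\<close>] reach_subset[OF \<open>j < n\<close>, of E s m] by auto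
  have "\<beta>^Suc m \<le> M (s + m) i l * transition n M s m l j"
    using l Suc.IH[OF l(2)] \<open>0 \<le> \<beta>\<close> by (simp add: mult_mono)
  also have "\<dots> \<le> (\<Sum>l<n. M (s + m) i l * transition n M s m l j)"
    using l(1) \<open>i < n\<close> \<open>j < n\<close>
    by (intro member_le_sum[of l _ "\<lambda>l. M (s + m) i l * transition n M s m l j"])
      (auto intro!: mult_nonneg_nonneg M_nonneg transition_nonneg)
  finally show ?case
    by simp
qed simp

lemma rtrancl_exit_edge:
  assumes "(a, b) \<in> R\<^sup>*" "a \<in> S" "b \<notin> S"
  shows "\<exists>x y. (x, y) \<in> R \<and> x \<in> S \<and> y \<notin> S"
  using assms by (induction rule: rtrancl_induct) auto

lemma reach_psubset:
  assumes "j < n" and conn: "strongly_connected_on n (\<Union>t\<in>{s + m..<s + m + B}. E t)"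
    and "reach n E s j m \<noteq> {..<n}"
  shows "reach n E s j m \<subset> reach n E s j (m + B)"
proof -
  let ?R = "reach n E s j m"
  obtain i where "i < n" "i \<notin> ?R"
    using reach_subset[OF \<open>j < n\<close>, of E s m] assms(3) by blast
  have "(j, i) \<in> ((\<Union>t\<in>{s + m..<s + m + B}. E t) \<inter> ({..<n} \<times> {..<n}))\<^sup>*"
    using conn \<open>j < n\<close> \<open>i < n\<close> unfolding strongly_connected_on_def by blast
  moreover have "j \<in> ?R"
    using reach_mono[of 0 m n E s j] by auto
  ultimately have "\<exists>a b. (a, b) \<in> (\<Union>t\<in>{s + m..<s + m + B}. E t) \<inter> ({..<n} \<times> {..<n})
      \<and> a \<in> ?R \<and> b \<notin> ?R"
    using \<open>i \<notin> ?R\<close> by (rule rtrancl_exit_edge)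
  then obtain a b t where ab: "a \<in> ?R" "b \<notin> ?R" "(a, b) \<in> E t" "b < n"
    and t: "s + m \<le> t" "t < s + m + B"
    by auto
  have "m \<le> t - s"
    using t by simp
  then have "a \<in> reach n E s j (t - s)"
    using reach_mono ab(1) by blast
  then have "b \<in> reach n E s j (Suc (t - s))"
    using ab t by auto
  moreover have "Suc (t - s) \<le> m + B"
    using t by linarith
  ultimately have "b \<in> reach n E s j (m + B)"
    using reach_mono by blast
  then show ?thesis
    using ab(2) reach_mono[of m "m + B" n E s j] by auto
qed

lemma card_reach_ge:
  assumes "j < n" and conn: "\<And>k. strongly_connected_on n (\<Union>t\<in>{k..<k + B}. E t)"
  shows "min n (Suc m) \<le> card (reach n E s j (m * B))"
proof (induction m)
  case (Suc m)
  have fin: "finite (reach n E s j k)" for k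
    using finite_subset[OF reach_subset[OF \<open>j < n\<close>]] by simp
  show ?case
  proof (cases "reach n E s j (m * B) = {..<n}")
    case True
    then have "reach n E s j (Suc m * B) = {..<n}"
      using reach_mono[of "m * B" "Suc m * B" n E s j] reach_subset[OF \<open>j < n\<close>, of E s "Suc m * B"]
      by auto
    then show ?thesis
      by simp
  next
    case False
    have "reach n E s j (m * B) \<subset> reach n E s j (m * B + B)"
      using reach_psubset[OF \<open>j < n\<close> conn False] .
    then have "reach n E s j (m * B) \<subset> reach n E s j (Suc m * B)"
      by (simp add: add.commute)
    then have "card (reach n E s j (m * B)) < card (reach n E s j (Suc m * B))"
      using fin by (intro psubset_card_mono)
    then show ?thesis
      using Suc.IH by linarith
  qed
qed simp

lemma reach_eq_all:
  assumes "j < n" and "\<And>k. strongly_connected_on n (\<Union>t\<in>{k..<k + B}. E t)"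
  shows "reach n E s j (n * B) = {..<n}"
proof (rule card_seteq[OF finite_lessThan reach_subset[OF \<open>j < n\<close>]])
  show "card {..<n} \<le> card (reach n E s j (n * B))"
    using card_reach_ge[OF assms, of n s] by simp
qed

lemma transition_ge_power:
  assumes "\<And>t i j. i < n \<Longrightarrow> j < n \<Longrightarrow> 0 \<le> M t i j"
    and "\<And>t i. i < n \<Longrightarrow> \<beta> \<le> M t i i"
    and "\<And>t i l. i < n \<Longrightarrow> l < n \<Longrightarrow> (l, i) \<in> E t \<Longrightarrow> \<beta> \<le> M t i l"
    and "0 \<le> \<beta>" and "\<And>k. strongly_connected_on n (\<Union>t\<in>{k..<k + B}. E t)"
    and "i < n" "j < n"
  shows "\<beta>^(n * B) \<le> transition n M s (n * B) i j"
proof (rule transition_ge_power_on_reach[where E = E])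
  show "i \<in> reach n E s j (n * B)"
    using reach_eq_all[where E = E and s = s, OF \<open>j < n\<close> assms(5)] \<open>i < n\<close> by simp
qed (use assms in auto)

lemma diameter_perturbed_step:
  fixes r e :: "nat \<Rightarrow> nat \<Rightarrow> 'a::real_normed_vector"
  assumes "0 < n"
    and P_nonneg: "\<And>t i j. i < n \<Longrightarrow> j < n \<Longrightarrow> 0 \<le> P t i j"
    and P_rows: "\<And>t i. i < n \<Longrightarrow> (\<Sum>j<n. P t i j) = 1"
    and rec: "\<And>t i. i < n \<Longrightarrow> r (Suc t) i = (\<Sum>j<n. P t i j *\<^sub>R r t j) + e t i"
    and e_le: "\<And>t i. i < n \<Longrightarrow> norm (e t i) \<le> \<epsilon> t"
  shows "diameter (r (Suc t) ` {..<n}) \<le> diameter (r t ` {..<n}) + 2 * \<epsilon> t"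
proof -
  have "diameter (r (Suc t) ` {..<n}) = diameter ((\<lambda>i. (\<Sum>j<n. P t i j *\<^sub>R r t j) + e t i) ` {..<n})"
    using rec by (intro arg_cong[where f = diameter] image_cong) auto
  also have "\<dots> \<le> diameter ((\<lambda>i. \<Sum>j<n. P t i j *\<^sub>R r t j) ` {..<n}) + 2 * \<epsilon> t"
    using \<open>0 < n\<close> e_le by (rule diameter_image_add_le)
  also have "diameter ((\<lambda>i. \<Sum>j<n. P t i j *\<^sub>R r t j) ` {..<n}) \<le> (1 - 0) * diameter (r t ` {..<n})"
    using \<open>0 < n\<close> P_nonneg P_rows by (intro diameter_stochastic_image_le) auto
  finally show ?thesis
    by simp
qed

lemma diameter_perturbed_window:
  fixes r e :: "nat \<Rightarrow> nat \<Rightarrow> 'a::real_normed_vector"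
  assumes "0 < n"
    and P_nonneg: "\<And>t i j. i < n \<Longrightarrow> j < n \<Longrightarrow> 0 \<le> P t i j"
    and P_rows: "\<And>t i. i < n \<Longrightarrow> (\<Sum>j<n. P t i j) = 1"
    and P_mixing: "\<And>i j. i < n \<Longrightarrow> j < n \<Longrightarrow> \<eta> \<le> transition n P k T i j" and "0 \<le> \<eta>"
    and rec: "\<And>t i. i < n \<Longrightarrow> r (Suc t) i = (\<Sum>j<n. P t i j *\<^sub>R r t j) + e t i"
    and e_le: "\<And>t i. i < n \<Longrightarrow> norm (e t i) \<le> \<epsilon> t"
  shows "diameter (r (k + T) ` {..<n}) \<le> (1 - \<eta>) * diameter (r k ` {..<n}) + 2 * (\<Sum>t\<in>{k..<k + T}. \<epsilon> t)"
proof -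
  \<comment> \<open>compare with the unperturbed iteration started from r k\<close>
  define w where "w = rec_nat (r k) (\<lambda>m wm i. \<Sum>l<n. P (k + m) i l *\<^sub>R wm l)"
  have w_Suc: "w (Suc m) i = (\<Sum>l<n. P (k + m) i l *\<^sub>R w m l)" for m i
    unfolding w_def by simp
  have close: "norm (r (k + m) i - w m i) \<le> (\<Sum>t\<in>{k..<k + m}. \<epsilon> t)" if "i < n" for m i
    using that
  proof (induction m arbitrary: i)
    case 0
    then show ?case
      by (simp add: w_def)
  next
    case (Suc m)
    have "r (k + Suc m) i - w (Suc m) i = (\<Sum>l<n. P (k + m) i l *\<^sub>R (r (k + m) l - w m l)) + e (k + m) i"
      using rec[OF Suc.prems, of "k + m"] by (simp add: w_Suc scaleR_diff_right sum_subtractf)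
    then have "norm (r (k + Suc m) i - w (Suc m) i)
        \<le> norm (\<Sum>l<n. P (k + m) i l *\<^sub>R (r (k + m) l - w m l)) + norm (e (k + m) i)"
      by (simp add: norm_triangle_ineq)
    also have "\<dots> \<le> (\<Sum>t\<in>{k..<k + m}. \<epsilon> t) + \<epsilon> (k + m)"
      using Suc.IH P_nonneg P_rows Suc.prems e_le by (intro add_mono norm_convex_combination_le) auto
    finally show ?case
      by simp
  qed
  have "diameter (r (k + T) ` {..<n}) = diameter ((\<lambda>i. w T i + (r (k + T) i - w T i)) ` {..<n})"
    by simp
  also have "\<dots> \<le> diameter (w T ` {..<n}) + 2 * (\<Sum>t\<in>{k..<k + T}. \<epsilon> t)"
    using \<open>0 < n\<close> close by (rule diameter_image_add_le)
  also have "w T i = (\<Sum>j<n. transition n P k T i j *\<^sub>R r k j)" if "i < n" for i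
    using linear_recursion_transition[of n w P k, OF w_Suc that] by (simp add: w_def)
  then have "diameter (w T ` {..<n}) = diameter ((\<lambda>i. \<Sum>j<n. transition n P k T i j *\<^sub>R r k j) ` {..<n})"
    by (intro arg_cong[where f = diameter] image_cong) auto
  also have "\<dots> \<le> (1 - \<eta>) * diameter (r k ` {..<n})"
    using \<open>0 < n\<close> P_mixing \<open>0 \<le> \<eta>\<close>
    by (intro diameter_stochastic_image_le transition_nonneg transition_row_sum P_nonneg P_rows)
  finally show ?thesis
    by simp
qed

lemma diameter_perturbed_consensus:
  fixes r e :: "nat \<Rightarrow> nat \<Rightarrow> 'a::real_normed_vector"
  assumes "0 < n"
    and P_nonneg: "\<And>t i j. i < n \<Longrightarrow> j < n \<Longrightarrow> 0 \<le> P t i j"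
    and P_rows: "\<And>t i. i < n \<Longrightarrow> (\<Sum>j<n. P t i j) = 1"
    and P_mixing: "\<And>k i j. i < n \<Longrightarrow> j < n \<Longrightarrow> \<eta> \<le> transition n P k T i j" and "0 \<le> \<eta>"
    and "0 < T" "0 < \<rho>" "\<rho> \<le> 1" "\<rho>^T = 1 - \<eta>"
    and rec: "\<And>t i. i < n \<Longrightarrow> r (Suc t) i = (\<Sum>j<n. P t i j *\<^sub>R r t j) + e t i"
    and e_le: "\<And>t i. i < n \<Longrightarrow> norm (e t i) \<le> \<epsilon> t"
  shows "diameter (r k ` {..<n})
    \<le> (\<rho>^k / (1 - \<eta>)) * diameter (r 0 ` {..<n}) + (2 / (1 - \<eta>)) * (\<Sum>t<k. \<rho>^(k - Suc t) * \<epsilon> t)"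
proof (rule geometric_window_bound[where D = "\<lambda>k. diameter (r k ` {..<n})"])
  show "0 \<le> \<epsilon> t" for t
    using norm_ge_zero[of "e t 0"] e_le[OF \<open>0 < n\<close>, of t] by linarith
  show "diameter (r (Suc t) ` {..<n}) \<le> diameter (r t ` {..<n}) + 2 * \<epsilon> t" for t
    using \<open>0 < n\<close> P_nonneg P_rows rec e_le by (rule diameter_perturbed_step)
  show "diameter (r (k + T) ` {..<n}) \<le> (1 - \<eta>) * diameter (r k ` {..<n}) + 2 * (\<Sum>t\<in>{k..<k + T}. \<epsilon> t)"
    for k
    using \<open>0 < n\<close> P_nonneg P_rows P_mixing \<open>0 \<le> \<eta>\<close> rec e_le by (rule diameter_perturbed_window)
qed (use assms in \<open>auto intro: diameter_image_nonneg\<close>)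

section \<open>Convexity\<close>

lemma above_tangent_of_segment_convex:
  fixes f :: "'a::real_inner \<Rightarrow> real"
  assumes der: "(f has_derivative (\<lambda>h. inner D h)) (at x)"
    and chord: "\<And>t. 0 < t \<Longrightarrow> t < 1 \<Longrightarrow> f (x + t *\<^sub>R (w - x)) \<le> (1 - t) * f x + t * f w"
  shows "f x + inner D (w - x) \<le> f w"
proof -
  define g where "g t = f (x + t *\<^sub>R (w - x))" for t :: real
  have "((\<lambda>t::real. x + t *\<^sub>R (w - x)) has_derivative (\<lambda>t. t *\<^sub>R (w - x))) (at 0 within {0<..})"
    by (auto intro!: derivative_eq_intros)
  moreover have "(f has_derivative (\<lambda>h. inner D h)) (at (x + 0 *\<^sub>R (w - x)))"
    using der by simp
  ultimately have "(g has_derivative (\<lambda>t. inner D (t *\<^sub>R (w - x)))) (at 0 within {0<..})"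
    unfolding g_def by (rule has_derivative_compose)
  moreover have "(\<lambda>t. inner D (t *\<^sub>R (w - x))) = (*) (inner D (w - x))"
    by (auto simp: inner_scaleR_right mult.commute)
  ultimately have "(g has_field_derivative inner D (w - x)) (at 0 within {0<..})"
    by (simp add: has_field_derivative_def)
  then have lim: "((\<lambda>t. (g t - g 0) / (t - 0)) \<longlongrightarrow> inner D (w - x)) (at_right 0)"
    unfolding has_field_derivative_iff .
  have "eventually (\<lambda>t. (g t - g 0) / (t - 0) \<le> f w - f x) (at_right 0)"
    using eventually_at_right_real[OF zero_less_one]
  proof (rule eventually_mono)
    fix t :: real assume "t \<in> {0<..<1}"
    then have "g t - g 0 \<le> t * (f w - f x)"
      using chord[of t] unfolding g_def by (simp add: algebra_simps)
    then show "(g t - g 0) / (t - 0) \<le> f w - f x"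
      using \<open>t \<in> {0<..<1}\<close> by (simp add: divide_le_eq mult.commute)
  qed
  then have "inner D (w - x) \<le> f w - f x"
    by (rule tendsto_le[OF trivial_limit_at_right_real tendsto_const lim])
  then show ?thesis
    by simp
qed

lemma strongly_convex_on_above_tangent:
  fixes f :: "'a::real_inner \<Rightarrow> real"
  assumes sc: "strongly_convex_on \<tau> X f" and "0 \<le> \<tau>" "x \<in> X" "w \<in> X"
    and der: "(f has_derivative (\<lambda>h. inner D h)) (at x)"
  shows "f x + inner D (w - x) \<le> f w"
proof (rule above_tangent_of_segment_convex[OF der])
  fix t :: real assume "0 < t" "t < 1"
  then have "f (t *\<^sub>R w + (1 - t) *\<^sub>R x)
      \<le> t * f w + (1 - t) * f x - \<tau> / 2 * t * (1 - t) * (norm (w - x))\<^sup>2"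
    using sc assms(3,4) unfolding strongly_convex_on_def by simp
  moreover have "0 \<le> \<tau> / 2 * t * (1 - t) * (norm (w - x))\<^sup>2"
    using \<open>0 \<le> \<tau>\<close> \<open>0 < t\<close> \<open>t < 1\<close> by simp
  ultimately have "f (t *\<^sub>R w + (1 - t) *\<^sub>R x) \<le> t * f w + (1 - t) * f x"
    by linarith
  moreover have "x + t *\<^sub>R (w - x) = t *\<^sub>R w + (1 - t) *\<^sub>R x"
    by (simp add: algebra_simps)
  ultimately show "f (x + t *\<^sub>R (w - x)) \<le> (1 - t) * f x + t * f w"
    by simp
qed

lemma convex_on_inner_affine:
  fixes c x :: "'a::real_inner"
  assumes "convex S"
  shows "convex_on S (\<lambda>z. inner c (z - x))"
  unfolding convex_on_def
proof (intro conjI assms ballI allI impI)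
  fix y z :: 'a and u v :: real
  assume "u + v = 1"
  have "u * inner c (y - x) + v * inner c (z - x) = u * inner c y + v * inner c z - (u + v) * inner c x"
    by (simp add: inner_diff_right algebra_simps)
  then show "inner c (u *\<^sub>R y + v *\<^sub>R z - x) \<le> u * inner c (y - x) + v * inner c (z - x)"
    using \<open>u + v = 1\<close> by (simp add: inner_add_right inner_diff_right)
qed

lemma strongly_convex_minimizer_growth:
  fixes f g :: "'a::real_inner \<Rightarrow> real"
  assumes "convex X" "strongly_convex_on \<tau> X f" "convex_on X g" "x \<in> X" "z \<in> X"
    and min: "f z + g z \<le> f ((1/2) *\<^sub>R x + (1/2) *\<^sub>R z) + g ((1/2) *\<^sub>R x + (1/2) *\<^sub>R z)"
  shows "\<tau> / 4 * (norm (z - x))\<^sup>2 \<le> (f x + g x) - (f z + g z)"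
proof -
  have "\<forall>y\<in>X. \<forall>t. 0 \<le> t \<and> t \<le> 1 \<longrightarrow> f (t *\<^sub>R x + (1 - t) *\<^sub>R y)
      \<le> t * f x + (1 - t) * f y - \<tau> / 2 * t * (1 - t) * (norm (x - y))\<^sup>2"
    using assms(2,4) unfolding strongly_convex_on_def by blast
  from this[rule_format, OF \<open>z \<in> X\<close>, of "1/2"]
  have "f ((1/2) *\<^sub>R x + (1/2) *\<^sub>R z) \<le> 1/2 * f x + 1/2 * f z - \<tau> / 8 * (norm (x - z))\<^sup>2"
    by simp
  moreover have "g ((1/2) *\<^sub>R x + (1/2) *\<^sub>R z) \<le> 1/2 * g x + 1/2 * g z"
    using convex_onD[OF assms(3), of "1/2" x z] assms(4,5) by simp
  ultimately show ?thesis
    using min by (simp add: norm_minus_commute)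
qed

lemma convex_strict_epigraph:
  assumes "convex_on U G"
  shows "convex {(z, t). z \<in> U \<and> G z < t}"
  unfolding convex_def
proof (clarsimp)
  fix z1 t1 z2 t2 and u v :: real
  assume h: "z1 \<in> U" "G z1 < t1" "z2 \<in> U" "G z2 < t2" "0 \<le> u" "0 \<le> v" "u + v = 1"
  show "u *\<^sub>R z1 + v *\<^sub>R z2 \<in> U \<and> G (u *\<^sub>R z1 + v *\<^sub>R z2) < u * t1 + v * t2"
  proof
    show "u *\<^sub>R z1 + v *\<^sub>R z2 \<in> U"
      using convex_on_imp_convex[OF assms] h unfolding convex_def by blast
    have "G (u *\<^sub>R z1 + v *\<^sub>R z2) \<le> u * G z1 + v * G z2"
      using assms h unfolding convex_on_def by blast
    also have "\<dots> < u * t1 + v * t2"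
    proof (cases "u = 0")
      case False
      then have "u * G z1 < u * t1"
        using h by simp
      moreover have "v * G z2 \<le> v * t2"
        using h by (simp add: mult_left_mono)
      ultimately show ?thesis
        by simp
    qed (use h in simp)
    finally show "G (u *\<^sub>R z1 + v *\<^sub>R z2) < u * t1 + v * t2" .
  qed
qed

lemma inner_maximized_at_interior_point:
  fixes p :: "'a::real_inner"
  assumes "open U" "x \<in> U" "\<And>z. z \<in> U \<Longrightarrow> inner p z \<le> inner p x"
  shows "p = 0"
proof (rule ccontr)
  assume "p \<noteq> 0"
  obtain e where "e > 0" "ball x e \<subseteq> U"
    using assms(1,2) open_contains_ball by blast
  define \<delta> where "\<delta> = e / (2 * norm p)"
  have "0 < \<delta>" "\<delta> * norm p < e"
    using \<open>p \<noteq> 0\<close> \<open>e > 0\<close> unfolding \<delta>_def by auto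
  then have "x + \<delta> *\<^sub>R p \<in> U"
    using \<open>ball x e \<subseteq> U\<close> by (auto simp: dist_norm)
  then have "inner p (x + \<delta> *\<^sub>R p) \<le> inner p x"
    by (rule assms(3))
  moreover have "inner p (x + \<delta> *\<^sub>R p) = inner p x + \<delta> * (norm p)\<^sup>2"
    by (simp add: inner_add_right power2_norm_eq_inner)
  moreover have "0 < \<delta> * (norm p)\<^sup>2"
    using \<open>0 < \<delta>\<close> \<open>p \<noteq> 0\<close> by simp
  ultimately show False
    by linarith
qed

lemma subgradient_exists:
  fixes G :: "'a::euclidean_space \<Rightarrow> real"
  assumes "convex_on U G" "open U" "x \<in> U"
  shows "\<exists>g. is_subgradient U G x g"
proof -
  \<comment> \<open>separate the strict epigraph from the point (x, G x)\<close>
  obtain a b where "a \<noteq> 0" and below: "\<forall>s\<in>{(z, t). z \<in> U \<and> G z < t}. inner a s \<le> b"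
    and above: "b \<le> inner a (x, G x)"
    using separating_hyperplane_sets[OF convex_strict_epigraph[OF assms(1)], of "{(x, G x)}"] assms(3)
    by fastforce
  obtain p c where a: "a = (p, c)"
    by (cases a)
  have sep: "inner p z + c * t \<le> inner p x + c * G x" if "z \<in> U" "G z < t" for z t
    using below[THEN bspec, of "(z, t)"] above that unfolding a by (simp add: inner_Pair)
  have "c \<le> 0"
    using sep[OF assms(3), of "G x + 1"] by (simp add: algebra_simps)
  moreover have "c \<noteq> 0"
  proof
    assume "c = 0"
    have "p = 0"
    proof (rule inner_maximized_at_interior_point[OF assms(2,3)])
      fix z assume "z \<in> U"
      then show "inner p z \<le> inner p x"
        using sep[of z "G z + 1"] \<open>c = 0\<close> by simp
    qed
    then show False
      using \<open>a \<noteq> 0\<close> \<open>c = 0\<close> unfolding a by (simp add: zero_prod_def)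
  qed
  ultimately have "c < 0"
    by simp
  have "G x + inner ((- 1 / c) *\<^sub>R p) (z - x) \<le> G z" if "z \<in> U" for z
  proof -
    have "inner p z + c * G z \<le> inner p x + c * G x"
    proof (rule field_le_epsilon)
      fix e :: real assume "0 < e"
      then show "inner p z + c * G z \<le> inner p x + c * G x + e"
        using sep[OF that, of "G z + e / (- c)"] \<open>c < 0\<close> by (simp add: algebra_simps divide_pos_neg)
    qed
    then show ?thesis
      using \<open>c < 0\<close> by (simp add: inner_diff_right field_simps)
  qed
  then show ?thesis
    unfolding is_subgradient_def by blast
qed

lemma surrogate_step_bound:
  fixes ft G :: "'a::euclidean_space \<Rightarrow> real" and c D x xt :: 'a
  assumes "convex X" "X \<subseteq> U" "open U" "x \<in> X" "xt \<in> X"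
    and "convex_on U G" and sc: "strongly_convex_on \<tau> X ft" and "0 < \<tau>"
    and der: "(ft has_derivative (\<lambda>h. inner D h)) (at x)"
    and min: "\<And>z. z \<in> X \<Longrightarrow> ft xt + inner c (xt - x) + G xt \<le> ft z + inner c (z - x) + G z"
    and subgradient_le: "\<And>g. is_subgradient U G x g \<Longrightarrow> norm g \<le> L"
  shows "norm (xt - x) \<le> 4 * (norm (D + c) + L) / \<tau>"
proof -
  define h where "h z = inner c (z - x) + G z" for z
  have "convex_on X h"
    unfolding h_def using assms
    by (intro convex_on_add convex_on_inner_affine convex_on_subset[of U G X])
  have mid: "(1/2) *\<^sub>R x + (1/2) *\<^sub>R xt \<in> X"
    using assms(1,4,5) convexD[of X x xt "1/2" "1/2"] by simp
  have "ft xt + h xt \<le> ft ((1/2) *\<^sub>R x + (1/2) *\<^sub>R xt) + h ((1/2) *\<^sub>R x + (1/2) *\<^sub>R xt)"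
    using min[OF mid] unfolding h_def by (simp add: add.assoc)
  then have growth: "\<tau> / 4 * (norm (xt - x))\<^sup>2 \<le> (ft x + h x) - (ft xt + h xt)"
    by (rule strongly_convex_minimizer_growth[OF \<open>convex X\<close> sc \<open>convex_on X h\<close> assms(4,5)])
  have tangent: "ft x + inner D (xt - x) \<le> ft xt"
    using sc \<open>0 < \<tau>\<close> assms(4,5) der by (intro strongly_convex_on_above_tangent) auto
  obtain g where g: "is_subgradient U G x g"
    using subgradient_exists assms by blast
  then have "G x + inner g (xt - x) \<le> G xt"
    using assms(2,5) unfolding is_subgradient_def by auto
  then have "inner (D + c + g) (xt - x) \<le> (ft xt + h xt) - (ft x + h x)"
    using tangent unfolding h_def by (simp add: inner_add_left algebra_simps)
  moreover have "- inner (D + c + g) (xt - x) \<le> (norm (D + c) + L) * norm (xt - x)"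
  proof -
    have "norm (D + c + g) \<le> norm (D + c) + L"
      using norm_triangle_ineq[of "D + c" g] subgradient_le[OF g] by linarith
    then have "norm (D + c + g) * norm (xt - x) \<le> (norm (D + c) + L) * norm (xt - x)"
      by (rule mult_right_mono) simp
    then show ?thesis
      using abs_le_D2[OF Cauchy_Schwarz_ineq2[of "D + c + g" "xt - x"]] by linarith
  qed
  ultimately have K: "\<tau> / 4 * (norm (xt - x))\<^sup>2 \<le> (norm (D + c) + L) * norm (xt - x)"
    using growth by linarith
  show ?thesis
  proof (cases "xt = x")
    case True
    have "0 \<le> L"
      using subgradient_le[OF g] norm_ge_zero order_trans by blast
    then show ?thesis
      using True \<open>0 < \<tau>\<close> by simp
  next
    case False
    then have "\<tau> / 4 * norm (xt - x) \<le> norm (D + c) + L"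
      using K by (simp add: power2_eq_square mult.assoc[symmetric])
    then show ?thesis
      using \<open>0 < \<tau>\<close> by (simp add: field_simps)
  qed
qed

section \<open>The SONATA iteration\<close>

locale sonata =
  fixes I :: nat
    and X U :: "'a::euclidean_space set"
    and gradf :: "nat \<Rightarrow> 'a \<Rightarrow> 'a"
    and G :: "'a \<Rightarrow> real"
    and L :: "nat \<Rightarrow> real" and L_F L_G :: real
    and ft :: "nat \<Rightarrow> 'a \<Rightarrow> 'a \<Rightarrow> real" and gradft :: "nat \<Rightarrow> 'a \<Rightarrow> 'a \<Rightarrow> 'a"
    and tau :: "nat \<Rightarrow> real"
    and \<gamma> :: "nat \<Rightarrow> real"
    and E :: "nat \<Rightarrow> (nat \<times> nat) set" and B :: nat
    and A :: "nat \<Rightarrow> nat \<Rightarrow> nat \<Rightarrow> real" and \<kappa> :: real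
    and x xhalf xt y :: "nat \<Rightarrow> nat \<Rightarrow> 'a" and \<phi> :: "nat \<Rightarrow> nat \<Rightarrow> real"
  assumes I_pos: "0 < I"
    and X_convex: "convex X" and O_open: "open U" and X_sub_O: "X \<subseteq> U"
    and f_Lip: "\<And>i. i < I \<Longrightarrow> lipschitz_on (L i) X (gradf i)"
    and G_convex: "convex_on U G"
    and F_bdd: "\<And>z. z \<in> X \<Longrightarrow> norm (\<Sum>i<I. gradf i z) \<le> L_F"
    and G_bdd: "\<And>z g. z \<in> X \<Longrightarrow> is_subgradient U G z g \<Longrightarrow> norm g \<le> L_G"
    and gamma_pos: "\<And>k. 0 < \<gamma> k" and gamma_le1: "\<And>k. \<gamma> k \<le> 1"
    and gamma_sq: "summable (\<lambda>k. (\<gamma> k)\<^sup>2)"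
    and B_pos: "0 < B"
    and B_conn: "\<And>k. strongly_connected_on I (\<Union>t\<in>{k..<k+B}. E t)"
    and kappa_pos: "0 < \<kappa>"
    and A_nonneg: "\<And>k i j. i < I \<Longrightarrow> j < I \<Longrightarrow> 0 \<le> A k i j"
    and A_edge: "\<And>k i j. i < I \<Longrightarrow> j < I \<Longrightarrow> (j, i) \<in> E k \<Longrightarrow> A k i j \<ge> \<kappa>"
    and A_diag: "\<And>k i. i < I \<Longrightarrow> A k i i \<ge> \<kappa>"
    and A_colstoch: "\<And>k j. j < I \<Longrightarrow> (\<Sum>i<I. A k i j) = 1"
    and ft_tau_pos: "\<And>i. i < I \<Longrightarrow> 0 < tau i"
    and ft_strong: "\<And>i w. i < I \<Longrightarrow> w \<in> X \<Longrightarrow> strongly_convex_on (tau i) X (\<lambda>z. ft i z w)"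
    and ft_grad: "\<And>i z w. i < I \<Longrightarrow> z \<in> U \<Longrightarrow> w \<in> X \<Longrightarrow>
        ((\<lambda>v. ft i v w) has_derivative (\<lambda>h. inner (gradft i z w) h)) (at z)"
    and ft_consistent: "\<And>i z. i < I \<Longrightarrow> z \<in> X \<Longrightarrow> gradft i z z = gradf i z"
    and init_x: "\<And>i. i < I \<Longrightarrow> x 0 i \<in> X"
    and init_phi: "\<And>i. i < I \<Longrightarrow> \<phi> 0 i = 1"
    and init_y: "\<And>i. i < I \<Longrightarrow> y 0 i = gradf i (x 0 i)"
    and step_xt_mem: "\<And>k i. i < I \<Longrightarrow> xt k i \<in> X"
    and step_xt_min: "\<And>k i z. i < I \<Longrightarrow> z \<in> X \<Longrightarrow>
        ft i (xt k i) (x k i) + inner (real I *\<^sub>R y k i - gradf i (x k i)) (xt k i - x k i) + G (xt k i)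
        \<le> ft i z (x k i) + inner (real I *\<^sub>R y k i - gradf i (x k i)) (z - x k i) + G z"
    and step_xhalf: "\<And>k i. i < I \<Longrightarrow> xhalf k i = x k i + \<gamma> k *\<^sub>R (xt k i - x k i)"
    and step_phi: "\<And>k i. i < I \<Longrightarrow> \<phi> (Suc k) i = (\<Sum>j<I. A k i j * \<phi> k j)"
    and step_x: "\<And>k i. i < I \<Longrightarrow>
        x (Suc k) i = (1 / \<phi> (Suc k) i) *\<^sub>R (\<Sum>j<I. (A k i j * \<phi> k j) *\<^sub>R xhalf k j)"
    and step_y: "\<And>k i. i < I \<Longrightarrow>
        y (Suc k) i = (1 / \<phi> (Suc k) i) *\<^sub>R (\<Sum>j<I. (A k i j * \<phi> k j) *\<^sub>R y k j)
                      + (1 / \<phi> (Suc k) i) *\<^sub>R (gradf i (x (Suc k) i) - gradf i (x k i))"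
begin

lemma kappa_le_1: "\<kappa> \<le> 1"
proof -
  have "A 0 0 0 \<le> (\<Sum>i<I. A 0 i 0)"
    using I_pos A_nonneg by (intro member_le_sum) auto
  then show ?thesis
    using A_diag[OF I_pos, of 0] A_colstoch[OF I_pos, of 0] by simp
qed

lemma phi_nonneg: "i < I \<Longrightarrow> 0 \<le> \<phi> k i"
  by (induction k arbitrary: i) (auto simp: init_phi step_phi intro!: sum_nonneg mult_nonneg_nonneg A_nonneg)

lemma phi_sum: "(\<Sum>i<I. \<phi> k i) = real I"
proof (induction k)
  case (Suc k)
  have "(\<Sum>i<I. \<phi> (Suc k) i) = (\<Sum>j<I. (\<Sum>i<I. A k i j) * \<phi> k j)"
    by (simp add: step_phi sum_distrib_right) (rule sum.swap)
  then show ?case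
    using Suc A_colstoch by simp
qed (simp add: init_phi)

lemma phi_le_I: "i < I \<Longrightarrow> \<phi> k i \<le> real I"
  using member_le_sum[of i "{..<I}" "\<phi> k"] phi_nonneg phi_sum by simp

lemma kappa_power_le_phi: "i < I \<Longrightarrow> \<kappa>^k \<le> \<phi> k i"
proof (induction k)
  case (Suc k)
  have "\<kappa> * \<kappa>^k \<le> A k i i * \<phi> k i"
    using A_diag[OF Suc.prems, of k] Suc kappa_pos by (intro mult_mono) auto
  also have "\<dots> \<le> (\<Sum>j<I. A k i j * \<phi> k j)"
    using Suc.prems by (intro member_le_sum[of i _ "\<lambda>j. A k i j * \<phi> k j"])
      (auto intro!: mult_nonneg_nonneg A_nonneg phi_nonneg)
  finally show ?case
    using step_phi[OF Suc.prems] by simp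
qed (simp add: init_phi)

text \<open>Within any \<open>T\<close> consecutive steps every agent influences every other one.\<close>

definition T :: nat where "T = I * B"

lemma T_pos: "0 < T"
  using I_pos B_pos by (simp add: T_def)

lemma phi_ge: "i < I \<Longrightarrow> \<kappa>^T \<le> \<phi> k i"
proof (cases "k < T")
  case True
  assume "i < I"
  have "\<kappa>^T \<le> \<kappa>^k"
    using True kappa_pos kappa_le_1 by (intro power_decreasing) auto
  then show ?thesis
    using kappa_power_le_phi[OF \<open>i < I\<close>] by (rule order_trans)
next
  case False
  assume "i < I"
  define s where "s = k - T"
  have "\<phi> (s + m) i = (\<Sum>j<I. transition I A s m i j *\<^sub>R \<phi> (s + 0) j)" for m
    by (rule linear_recursion_transition[OF _ \<open>i < I\<close>]) (simp add: step_phi)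
  moreover have "k = s + T"
    using False unfolding s_def by simp
  ultimately have "\<phi> k i = (\<Sum>j<I. transition I A s T i j * \<phi> s j)"
    by simp
  moreover have "(\<Sum>j<I. \<kappa>^T * \<phi> s j) \<le> (\<Sum>j<I. transition I A s T i j * \<phi> s j)"
    using \<open>i < I\<close> kappa_pos A_nonneg A_diag A_edge B_conn phi_nonneg unfolding T_def
    by (intro sum_mono mult_right_mono transition_ge_power[where E = E]) auto
  moreover have "\<kappa>^T \<le> \<kappa>^T * real I"
    using I_pos kappa_pos by simp
  ultimately show ?thesis
    using phi_sum[of s] by (simp flip: sum_distrib_left)
qed

lemma phi_pos: "i < I \<Longrightarrow> 0 < \<phi> k i"
  using phi_ge[of i k] kappa_pos by (meson order_less_le_trans zero_less_power)

text \<open>The mixing weights that make the \<open>x\<close> and \<open>y\<close> updates row-stochastic.\<close>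

definition P :: "nat \<Rightarrow> nat \<Rightarrow> nat \<Rightarrow> real" where
  "P k i j = A k i j * \<phi> k j / \<phi> (Suc k) i"

lemma P_nonneg: "i < I \<Longrightarrow> j < I \<Longrightarrow> 0 \<le> P k i j"
  unfolding P_def using A_nonneg phi_nonneg phi_pos by simp

lemma P_row_sum: "i < I \<Longrightarrow> (\<Sum>j<I. P k i j) = 1"
  unfolding P_def using step_phi[of i k, symmetric] phi_pos[of i "Suc k"] by (simp flip: sum_divide_distrib)

lemma P_ge: "i < I \<Longrightarrow> j < I \<Longrightarrow> \<kappa> \<le> A k i j \<Longrightarrow> \<kappa> * \<kappa>^T / real I \<le> P k i j"
proof -
  assume "i < I" "j < I" "\<kappa> \<le> A k i j"
  then have "\<kappa> * \<kappa>^T \<le> A k i j * \<phi> k j"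
    using kappa_pos phi_ge[of j k] by (intro mult_mono) auto
  then show ?thesis
    unfolding P_def using \<open>i < I\<close> kappa_pos A_nonneg[OF \<open>i < I\<close> \<open>j < I\<close>] phi_nonneg[OF \<open>j < I\<close>]
    by (intro frac_le phi_pos phi_le_I) auto
qed

definition \<eta> :: real where "\<eta> = (\<kappa> * \<kappa>^T / real I)^T / 2"

lemma eta_pos: "0 < \<eta>"
  unfolding \<eta>_def using kappa_pos I_pos by simp

lemma eta_le_half: "\<eta> \<le> 1 / 2"
proof -
  have "\<kappa> * \<kappa>^T \<le> 1 * 1"
    using kappa_pos kappa_le_1 by (intro mult_mono power_le_one) auto
  then have "\<kappa> * \<kappa>^T / real I \<le> 1"
    using I_pos by (simp add: divide_le_eq order_trans)
  then show ?thesis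
    unfolding \<eta>_def using kappa_pos by (simp add: power_le_one)
qed

lemma transition_P_ge: "i < I \<Longrightarrow> j < I \<Longrightarrow> \<eta> \<le> transition I P s T i j"
proof -
  assume "i < I" "j < I"
  have "(\<kappa> * \<kappa>^T / real I)^(I * B) \<le> transition I P s (I * B) i j"
    using \<open>i < I\<close> \<open>j < I\<close> kappa_pos P_ge[OF _ _ A_diag] P_ge[OF _ _ A_edge]
    by (intro transition_ge_power[where E = E] P_nonneg B_conn) auto
  then have "(\<kappa> * \<kappa>^T / real I)^T \<le> transition I P s T i j"
    by (simp add: T_def)
  moreover have "0 \<le> (\<kappa> * \<kappa>^T / real I)^T"
    using kappa_pos by simp
  ultimately show ?thesis
    unfolding \<eta>_def by linarith
qed

definition \<rho> :: real where "\<rho> = root T (1 - \<eta>)"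

lemma rho_pos: "0 < \<rho>" and rho_less_1: "\<rho> < 1" and rho_power_T: "\<rho>^T = 1 - \<eta>"
  unfolding \<rho>_def using T_pos eta_pos eta_le_half by (simp_all add: real_root_gt_zero)

definition step_sum :: "nat \<Rightarrow> real" where "step_sum k = (\<Sum>j<I. norm (xt k j - x k j))"

abbreviation Dx :: "nat \<Rightarrow> real" where "Dx k \<equiv> diameter (x k ` {..<I})"

lemma step_sum_nonneg: "0 \<le> step_sum k"
  unfolding step_sum_def by (simp add: sum_nonneg)

lemma x_step: "i < I \<Longrightarrow> x (Suc k) i = (\<Sum>j<I. P k i j *\<^sub>R xhalf k j)"
  unfolding step_x P_def by (simp add: scaleR_sum_right)

lemma x_in_X: "i < I \<Longrightarrow> x k i \<in> X"
proof (induction k arbitrary: i)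
  case (Suc k)
  have "xhalf k j \<in> X" if "j < I" for j
  proof -
    have "xhalf k j = (1 - \<gamma> k) *\<^sub>R x k j + \<gamma> k *\<^sub>R xt k j"
      using that by (simp add: step_xhalf algebra_simps)
    then show ?thesis
      using convexD[OF X_convex Suc.IH[OF that] step_xt_mem[OF that]] gamma_pos[of k] gamma_le1[of k]
      by simp
  qed
  then show ?case
    using Suc.prems P_nonneg P_row_sum by (auto simp: x_step intro!: convex_sum[OF _ X_convex])
qed (simp add: init_x)

lemma x_recursion:
  "i < I \<Longrightarrow> x (Suc k) i = (\<Sum>j<I. P k i j *\<^sub>R x k j) + \<gamma> k *\<^sub>R (\<Sum>j<I. P k i j *\<^sub>R (xt k j - x k j))"
  by (simp add: x_step step_xhalf scaleR_add_right sum.distrib scaleR_sum_right mult.commute)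

lemma x_perturbation_le: "i < I \<Longrightarrow> norm (\<gamma> k *\<^sub>R (\<Sum>j<I. P k i j *\<^sub>R (xt k j - x k j))) \<le> \<gamma> k * step_sum k"
proof -
  assume "i < I"
  have "norm (\<Sum>j<I. P k i j *\<^sub>R (xt k j - x k j)) \<le> step_sum k"
    unfolding step_sum_def using \<open>i < I\<close> P_nonneg P_row_sum
    by (intro norm_convex_combination_le member_le_sum) auto
  then show ?thesis
    using gamma_pos[of k] by (simp add: mult_left_mono)
qed

lemma Dx_le:
  "Dx k \<le> \<rho>^k / (1 - \<eta>) * Dx 0 + 2 / (1 - \<eta>) * (\<Sum>t<k. \<rho>^(k - Suc t) * (\<gamma> t * step_sum t))"
  using I_pos P_nonneg P_row_sum transition_P_ge eta_pos T_pos rho_pos rho_less_1 rho_power_T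
    x_recursion x_perturbation_le
  by (intro diameter_perturbed_consensus) auto

lemma norm_diff_average_le_diameter:
  fixes r :: "nat \<Rightarrow> 'a"
  assumes "i < I"
  shows "norm (r i - (1 / real I) *\<^sub>R (\<Sum>j<I. \<phi> k j *\<^sub>R r j)) \<le> diameter (r ` {..<I})"
proof -
  have "(1 / real I) *\<^sub>R (\<Sum>j<I. \<phi> k j *\<^sub>R r j) = (\<Sum>j<I. (\<phi> k j / real I) *\<^sub>R r j)"
    by (simp add: scaleR_sum_right)
  moreover have "(\<Sum>j<I. \<phi> k j / real I) = 1"
    using phi_sum I_pos by (simp flip: sum_divide_distrib)
  ultimately show ?thesis
    using assms phi_nonneg by (auto intro!: norm_diff_convex_combination_le_diameter)
qed

lemma average_x_in_X: "(1 / real I) *\<^sub>R (\<Sum>j<I. \<phi> k j *\<^sub>R x k j) \<in> X"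
proof -
  have "(1 / real I) *\<^sub>R (\<Sum>j<I. \<phi> k j *\<^sub>R x k j) = (\<Sum>j<I. (\<phi> k j / real I) *\<^sub>R x k j)"
    by (simp add: scaleR_sum_right)
  moreover have "(\<Sum>j<I. \<phi> k j / real I) = 1"
    using phi_sum I_pos by (simp flip: sum_divide_distrib)
  ultimately show ?thesis
    using phi_nonneg x_in_X by (auto intro!: convex_sum[OF _ X_convex])
qed

lemma L_nonneg: "i < I \<Longrightarrow> 0 \<le> L i"
  using f_Lip unfolding lipschitz_on_def by simp

lemma gradf_diff_le: "i < I \<Longrightarrow> a \<in> X \<Longrightarrow> b \<in> X \<Longrightarrow> norm (gradf i a - gradf i b) \<le> L i * norm (a - b)"
  using lipschitz_onD[OF f_Lip] by (simp add: dist_norm)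

definition L_sum :: real where "L_sum = (\<Sum>i<I. L i)"

lemma L_sum_nonneg: "0 \<le> L_sum"
  unfolding L_sum_def using L_nonneg by (intro sum_nonneg) auto

lemma x_increment_le: "i < I \<Longrightarrow> norm (x (Suc k) i - x k i) \<le> Dx k + \<gamma> k * step_sum k"
proof -
  assume "i < I"
  define mix where "mix = (\<Sum>j<I. P k i j *\<^sub>R (x k j - x k i))"
  have eq: "x (Suc k) i - x k i = mix + \<gamma> k *\<^sub>R (\<Sum>j<I. P k i j *\<^sub>R (xt k j - x k j))"
    unfolding mix_def using x_recursion[OF \<open>i < I\<close>] P_row_sum[OF \<open>i < I\<close>]
    by (simp add: scaleR_diff_right sum_subtractf flip: scaleR_sum_left)
  have "norm mix \<le> Dx k"
    unfolding mix_def using \<open>i < I\<close> P_nonneg P_row_sum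
    by (intro norm_convex_combination_le norm_diff_le_diameter_image) auto
  then have "norm (mix + \<gamma> k *\<^sub>R (\<Sum>j<I. P k i j *\<^sub>R (xt k j - x k j))) \<le> Dx k + \<gamma> k * step_sum k"
    using x_perturbation_le[OF \<open>i < I\<close>, of k] by (intro order_trans[OF norm_triangle_ineq] add_mono)
  then show ?thesis
    unfolding eq .
qed

lemma y_recursion:
  "i < I \<Longrightarrow> y (Suc k) i = (\<Sum>j<I. P k i j *\<^sub>R y k j)
    + (1 / \<phi> (Suc k) i) *\<^sub>R (gradf i (x (Suc k) i) - gradf i (x k i))"
  unfolding step_y P_def by (simp add: scaleR_sum_right)

lemma y_perturbation_le:
  assumes "i < I"
  shows "norm ((1 / \<phi> (Suc k) i) *\<^sub>R (gradf i (x (Suc k) i) - gradf i (x k i)))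
    \<le> L_sum / \<kappa>^T * (Dx k + \<gamma> k * step_sum k)"
proof -
  have "norm (gradf i (x (Suc k) i) - gradf i (x k i)) \<le> L i * (Dx k + \<gamma> k * step_sum k)"
    using assms L_nonneg x_increment_le
    by (intro order_trans[OF gradf_diff_le] mult_left_mono x_in_X) auto
  also have "\<dots> \<le> L_sum * (Dx k + \<gamma> k * step_sum k)"
    unfolding L_sum_def using assms L_nonneg gamma_pos[of k] step_sum_nonneg[of k] diameter_image_nonneg
    by (intro mult_right_mono member_le_sum add_nonneg_nonneg mult_nonneg_nonneg) auto
  finally have grad_le: "norm (gradf i (x (Suc k) i) - gradf i (x k i)) \<le> L_sum * (Dx k + \<gamma> k * step_sum k)" .
  have "1 / \<phi> (Suc k) i \<le> 1 / \<kappa>^T"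
    using phi_ge[OF assms] kappa_pos by (simp add: frac_le)
  then have "1 / \<phi> (Suc k) i * norm (gradf i (x (Suc k) i) - gradf i (x k i))
      \<le> 1 / \<kappa>^T * (L_sum * (Dx k + \<gamma> k * step_sum k))"
    using grad_le phi_pos[OF assms] kappa_pos by (intro mult_mono) auto
  then show ?thesis
    using phi_pos[OF assms, of "Suc k"] by simp
qed

abbreviation Dy :: "nat \<Rightarrow> real" where "Dy k \<equiv> diameter (y k ` {..<I})"

lemma Dy_le:
  "Dy k \<le> \<rho>^k / (1 - \<eta>) * Dy 0
    + 2 / (1 - \<eta>) * (\<Sum>t<k. \<rho>^(k - Suc t) * (L_sum / \<kappa>^T * (Dx t + \<gamma> t * step_sum t)))"
  using I_pos P_nonneg P_row_sum transition_P_ge eta_pos T_pos rho_pos rho_less_1 rho_power_T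
    y_recursion y_perturbation_le
  by (intro diameter_perturbed_consensus) auto

lemma tracking: "(\<Sum>i<I. \<phi> k i *\<^sub>R y k i) = (\<Sum>i<I. gradf i (x k i))"
proof (induction k)
  case (Suc k)
  have "(\<Sum>i<I. \<phi> (Suc k) i *\<^sub>R y (Suc k) i)
      = (\<Sum>i<I. \<Sum>j<I. (A k i j * \<phi> k j) *\<^sub>R y k j) + (\<Sum>i<I. gradf i (x (Suc k) i) - gradf i (x k i))"
  proof -
    have "\<phi> (Suc k) i *\<^sub>R y (Suc k) i
        = (\<Sum>j<I. (A k i j * \<phi> k j) *\<^sub>R y k j) + (gradf i (x (Suc k) i) - gradf i (x k i))" if "i < I" for i
      using phi_pos[OF that, of "Suc k"] that by (simp add: step_y scaleR_add_right)
    then show ?thesis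
      by (simp add: sum.distrib)
  qed
  also have "(\<Sum>i<I. \<Sum>j<I. (A k i j * \<phi> k j) *\<^sub>R y k j) = (\<Sum>j<I. \<phi> k j *\<^sub>R y k j)"
    by (subst sum.swap) (simp add: A_colstoch flip: scaleR_sum_left sum_distrib_right)
  finally show ?case
    using Suc by (simp add: sum_subtractf)
qed (simp add: init_phi init_y)

lemma norm_sum_gradf_le: "norm (\<Sum>j<I. gradf j (x k j)) \<le> L_F + L_sum * Dx k"
proof -
  define xbar where "xbar = (1 / real I) *\<^sub>R (\<Sum>j<I. \<phi> k j *\<^sub>R x k j)"
  have "norm (\<Sum>j<I. gradf j (x k j) - gradf j xbar) \<le> (\<Sum>j<I. L j * Dx k)"
    unfolding xbar_def using L_nonneg x_in_X average_x_in_X norm_diff_average_le_diameter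
    by (intro order_trans[OF norm_sum] sum_mono order_trans[OF gradf_diff_le] mult_left_mono) auto
  moreover have "norm (\<Sum>j<I. gradf j xbar) \<le> L_F"
    unfolding xbar_def by (rule F_bdd[OF average_x_in_X])
  ultimately show ?thesis
    using norm_triangle_ineq[of "\<Sum>j<I. gradf j xbar" "\<Sum>j<I. gradf j (x k j) - gradf j xbar"]
    by (simp add: L_sum_def sum_subtractf flip: sum_distrib_right)
qed

lemma norm_y_le: "i < I \<Longrightarrow> norm (y k i) \<le> Dy k + L_F + L_sum * Dx k"
proof -
  assume "i < I"
  have "y k i = (y k i - (1 / real I) *\<^sub>R (\<Sum>j<I. \<phi> k j *\<^sub>R y k j)) + (1 / real I) *\<^sub>R (\<Sum>j<I. gradf j (x k j))"
    by (simp add: tracking)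
  then have "norm (y k i) \<le> norm (y k i - (1 / real I) *\<^sub>R (\<Sum>j<I. \<phi> k j *\<^sub>R y k j))
      + norm ((1 / real I) *\<^sub>R (\<Sum>j<I. gradf j (x k j)))"
    by (metis norm_triangle_ineq)
  moreover have "norm ((1 / real I) *\<^sub>R (\<Sum>j<I. gradf j (x k j))) \<le> norm (\<Sum>j<I. gradf j (x k j))"
    using I_pos mult_left_mono[of 1 "real I" "norm (\<Sum>j<I. gradf j (x k j))"] by (simp add: divide_le_eq)
  ultimately show ?thesis
    using norm_diff_average_le_diameter[OF \<open>i < I\<close>, where r = "y k" and k = k] norm_sum_gradf_le[of k]
    by linarith
qed

lemma L_G_nonneg: "0 \<le> L_G"
proof -
  obtain g where "is_subgradient U G (x 0 0) g"
    using subgradient_exists[OF G_convex O_open] init_x[OF I_pos] X_sub_O by blast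
  then show ?thesis
    using G_bdd[OF init_x[OF I_pos]] norm_ge_zero order_trans by blast
qed

lemma L_F_nonneg: "0 \<le> L_F"
  using F_bdd[OF init_x[OF I_pos]] norm_ge_zero order_trans by blast

lemma local_step_le: "i < I \<Longrightarrow> norm (xt k i - x k i) \<le> 4 * (real I * norm (y k i) + L_G) / tau i"
proof -
  assume "i < I"
  have "x k i \<in> U"
    using x_in_X[OF \<open>i < I\<close>] X_sub_O by blast
  have "norm (xt k i - x k i)
      \<le> 4 * (norm (gradft i (x k i) (x k i) + (real I *\<^sub>R y k i - gradf i (x k i))) + L_G) / tau i"
    by (rule surrogate_step_bound[OF X_convex X_sub_O O_open x_in_X step_xt_mem G_convex
          ft_strong ft_tau_pos ft_grad[OF _ \<open>x k i \<in> U\<close>] step_xt_min G_bdd]) (use \<open>i < I\<close> x_in_X in auto)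
  then show ?thesis
    using ft_consistent[OF \<open>i < I\<close> x_in_X[OF \<open>i < I\<close>]] by simp
qed

definition tau_inv_sum :: real where "tau_inv_sum = (\<Sum>i<I. 1 / tau i)"

lemma step_sum_le:
  "step_sum k \<le> 4 * real I * tau_inv_sum * (real I * L_F + L_G)
    + 4 * real I * tau_inv_sum * real I * Dy k + 4 * real I * tau_inv_sum * real I * L_sum * Dx k"
proof -
  have "norm (xt k i - x k i) \<le> 4 * (real I * (Dy k + L_F + L_sum * Dx k) + L_G) * tau_inv_sum" if "i < I" for i
  proof -
    have "1 / tau i \<le> tau_inv_sum"
      unfolding tau_inv_sum_def using that ft_tau_pos
      by (intro member_le_sum[of i _ "\<lambda>i. 1 / tau i"]) (auto intro: less_imp_le)
    moreover have "real I * norm (y k i) + L_G \<le> real I * (Dy k + L_F + L_sum * Dx k) + L_G"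
      using norm_y_le[OF that, of k] by (simp add: mult_left_mono)
    ultimately have "4 * (real I * norm (y k i) + L_G) * (1 / tau i)
        \<le> 4 * (real I * (Dy k + L_F + L_sum * Dx k) + L_G) * tau_inv_sum"
      using L_G_nonneg L_F_nonneg L_sum_nonneg diameter_image_nonneg[of "y k" I]
        diameter_image_nonneg[of "x k" I] ft_tau_pos[OF that]
      by (intro mult_mono) auto
    then show ?thesis
      using local_step_le[OF that, of k] by simp
  qed
  then have "step_sum k \<le> (\<Sum>i<I. 4 * (real I * (Dy k + L_F + L_sum * Dx k) + L_G) * tau_inv_sum)"
    unfolding step_sum_def by (intro sum_mono) auto
  then show ?thesis
    by (simp add: algebra_simps)
qed

lemma gamma_tendsto_0: "\<gamma> \<longlonglongrightarrow> 0"
proof -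
  have "(\<lambda>k. sqrt ((\<gamma> k)\<^sup>2)) \<longlonglongrightarrow> sqrt 0"
    by (intro tendsto_real_sqrt summable_LIMSEQ_zero[OF gamma_sq])
  then show ?thesis
    using gamma_pos by (simp add: less_imp_le)
qed

lemma step_sum_bounded: obtains Mb where "\<And>k. step_sum k \<le> Mb"
proof -
  define C where "C = 2 / (1 - \<eta>)"
  define c where "c = L_sum / \<kappa>^T"
  have "0 < 1 - \<eta>"
    using eta_le_half by simp
  have initial: "\<rho>^k / (1 - \<eta>) * D \<le> C * D" if "0 \<le> D" for k D
  proof -
    have "\<rho>^k \<le> 2"
      using power_le_one[of \<rho> k] rho_pos rho_less_1 by linarith
    then show ?thesis
      unfolding C_def using \<open>0 < 1 - \<eta>\<close> that by (intro mult_right_mono divide_right_mono) auto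
  qed
  have hx: "Dx k \<le> C * Dx 0 + C * (\<Sum>t<k. \<rho>^(k - Suc t) * (\<gamma> t * step_sum t))" for k
    using Dx_le[of k] initial[OF diameter_image_nonneg, of k "x 0" I] unfolding C_def by linarith
  have hy: "Dy k \<le> C * Dy 0 + C * c * (\<Sum>t<k. \<rho>^(k - Suc t) * (Dx t + \<gamma> t * step_sum t))" for k
  proof -
    have "(\<Sum>t<k. \<rho>^(k - Suc t) * (c * (Dx t + \<gamma> t * step_sum t)))
        = c * (\<Sum>t<k. \<rho>^(k - Suc t) * (Dx t + \<gamma> t * step_sum t))"
      by (simp add: sum_distrib_left mult_ac)
    then show ?thesis
      using Dy_le[of k] initial[OF diameter_image_nonneg, of k "y 0" I] unfolding C_def c_def
      by (simp add: mult.assoc)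
  qed
  have "0 \<le> C" "0 \<le> c"
    unfolding C_def c_def using \<open>0 < 1 - \<eta>\<close> L_sum_nonneg kappa_pos by simp_all
  moreover have "0 \<le> tau_inv_sum"
    unfolding tau_inv_sum_def using ft_tau_pos by (intro sum_nonneg) (simp add: less_imp_le)
  ultimately show ?thesis
    using small_gain_bounded[OF less_imp_le[OF rho_pos] rho_less_1 \<open>0 \<le> C\<close> \<open>0 \<le> c\<close> _ _ _
        diameter_image_nonneg diameter_image_nonneg step_sum_nonneg less_imp_le[OF gamma_pos] gamma_tendsto_0 hx hy step_sum_le]
      L_sum_nonneg L_F_nonneg L_G_nonneg that
    by auto
qed

theorem consensus:
  assumes "i < I"
  defines "d \<equiv> \<lambda>k. norm (x k i - (1 / real I) *\<^sub>R (\<Sum>j<I. \<phi> k j *\<^sub>R x k j))"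
  shows "d \<longlonglongrightarrow> 0" "summable (\<lambda>k. \<gamma> k * d k)" "summable (\<lambda>k. (d k)\<^sup>2)"
proof -
  obtain Mb where Mb: "\<And>k. step_sum k \<le> Mb"
    using step_sum_bounded by blast
  then have "0 \<le> Mb"
    using step_sum_nonneg[of 0] by (rule order_trans[rotated])
  have "0 < 1 - \<eta>"
    using eta_le_half by simp
  have d_le: "d k \<le> Dx 0 / (1 - \<eta>) * \<rho>^k + 2 * Mb / (1 - \<eta>) * (\<Sum>t<k. \<rho>^(k - Suc t) * \<gamma> t)" for k
  proof -
    have "(\<Sum>t<k. \<rho>^(k - Suc t) * (\<gamma> t * step_sum t)) \<le> (\<Sum>t<k. \<rho>^(k - Suc t) * \<gamma> t) * Mb"
      unfolding sum_distrib_right using Mb rho_pos gamma_pos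
      by (intro sum_mono) (simp add: mult.assoc mult_left_mono)
    then have "2 / (1 - \<eta>) * (\<Sum>t<k. \<rho>^(k - Suc t) * (\<gamma> t * step_sum t))
        \<le> 2 * Mb / (1 - \<eta>) * (\<Sum>t<k. \<rho>^(k - Suc t) * \<gamma> t)"
      using \<open>0 < 1 - \<eta>\<close> by (simp add: divide_right_mono mult.commute)
    moreover have "d k \<le> Dx k"
      unfolding d_def by (rule norm_diff_average_le_diameter[OF assms(1)])
    ultimately show ?thesis
      using Dx_le[of k] by (simp add: mult.commute)
  qed
  have "0 \<le> Dx 0 / (1 - \<eta>)" "0 \<le> 2 * Mb / (1 - \<eta>)"
    using \<open>0 < 1 - \<eta>\<close> \<open>0 \<le> Mb\<close> diameter_image_nonneg[of "x 0" I] by simp_all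
  with d_le show "d \<longlonglongrightarrow> 0" "summable (\<lambda>k. \<gamma> k * d k)" "summable (\<lambda>k. (d k)\<^sup>2)"
    using summable_of_geometric_convolution_bound[OF less_imp_le[OF rho_pos] rho_less_1 _ _
        less_imp_le[OF gamma_pos] gamma_sq, where d = d]
    unfolding d_def by auto
qed

end

theorem mainTheorem18:
  fixes I :: nat
    and X U :: "'a::euclidean_space set"
    and f :: "nat \<Rightarrow> 'a \<Rightarrow> real" and gradf :: "nat \<Rightarrow> 'a \<Rightarrow> 'a"
    and G :: "'a \<Rightarrow> real"
    and L :: "nat \<Rightarrow> real" and L_F L_G :: real
    and ft :: "nat \<Rightarrow> 'a \<Rightarrow> 'a \<Rightarrow> real" and gradft :: "nat \<Rightarrow> 'a \<Rightarrow> 'a \<Rightarrow> 'a"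
    and tau Lt :: "nat \<Rightarrow> real"
    and \<gamma> :: "nat \<Rightarrow> real"
    and E :: "nat \<Rightarrow> (nat \<times> nat) set" and B :: nat
    and A :: "nat \<Rightarrow> nat \<Rightarrow> nat \<Rightarrow> real" and \<kappa> :: real
    and x xhalf xt y :: "nat \<Rightarrow> nat \<Rightarrow> 'a" and \<phi> :: "nat \<Rightarrow> nat \<Rightarrow> real"
  assumes X_nonempty: "X \<noteq> {}" and X_closed: "closed X" and X_convex: "convex X"
    and O_open: "open U" and X_sub_O: "X \<subseteq> U"
    and f_grad: "\<And>i z. i < I \<Longrightarrow> z \<in> U \<Longrightarrow> (f i has_derivative (\<lambda>h. inner (gradf i z) h)) (at z)"
    and f_C1: "\<And>i. i < I \<Longrightarrow> continuous_on U (gradf i)"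
    and f_Lip: "\<And>i. i < I \<Longrightarrow> lipschitz_on (L i) X (gradf i)"
    and G_convex: "convex_on U G"
    and V_bdd: "\<exists>c. \<forall>z\<in>X. (\<Sum>i<I. f i z) + G z \<ge> c"
    and F_bdd: "\<And>z. z \<in> X \<Longrightarrow> norm (\<Sum>i<I. gradf i z) \<le> L_F"
    and G_bdd: "\<And>z g. z \<in> X \<Longrightarrow> is_subgradient U G z g \<Longrightarrow> norm g \<le> L_G"
    and gamma_pos: "\<And>k. 0 < \<gamma> k" and gamma_le1: "\<And>k. \<gamma> k \<le> 1"
    and gamma_div: "\<not> summable \<gamma>"
    and gamma_sq: "summable (\<lambda>k. (\<gamma> k)\<^sup>2)"
    and B_pos: "0 < B"
    and B_conn: "\<And>k. strongly_connected_on I (\<Union>t\<in>{k..<k+B}. E t)"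
    and kappa_pos: "0 < \<kappa>"
    and A_nonneg: "\<And>k i j. i < I \<Longrightarrow> j < I \<Longrightarrow> 0 \<le> A k i j"
    and A_zero: "\<And>k i j. i < I \<Longrightarrow> j < I \<Longrightarrow> j \<noteq> i \<Longrightarrow> (j, i) \<notin> E k \<Longrightarrow> A k i j = 0"
    and A_edge: "\<And>k i j. i < I \<Longrightarrow> j < I \<Longrightarrow> (j, i) \<in> E k \<Longrightarrow> A k i j \<ge> \<kappa>"
    and A_diag: "\<And>k i. i < I \<Longrightarrow> A k i i \<ge> \<kappa>"
    and A_colstoch: "\<And>k j. j < I \<Longrightarrow> (\<Sum>i<I. A k i j) = 1"
    \<comment> \<open>\<open>gradft i z w\<close> is the gradient of \<open>ft i (\<cdot>|w)\<close> at \<open>z\<close>\<close>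
    and ft_tau_pos: "\<And>i. i < I \<Longrightarrow> 0 < tau i"
    and ft_strong: "\<And>i w. i < I \<Longrightarrow> w \<in> X \<Longrightarrow> strongly_convex_on (tau i) X (\<lambda>z. ft i z w)"
    and ft_grad: "\<And>i z w. i < I \<Longrightarrow> z \<in> U \<Longrightarrow> w \<in> X \<Longrightarrow>
        ((\<lambda>v. ft i v w) has_derivative (\<lambda>h. inner (gradft i z w) h)) (at z)"
    and ft_C1: "\<And>i w. i < I \<Longrightarrow> w \<in> X \<Longrightarrow> continuous_on U (\<lambda>z. gradft i z w)"
    and ft_consistent: "\<And>i z. i < I \<Longrightarrow> z \<in> X \<Longrightarrow> gradft i z z = gradf i z"
    and ft_Lip: "\<And>i z. i < I \<Longrightarrow> z \<in> X \<Longrightarrow> lipschitz_on (Lt i) X (\<lambda>w. gradft i z w)"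
    and init_x: "\<And>i. i < I \<Longrightarrow> x 0 i \<in> X"
    and init_phi: "\<And>i. i < I \<Longrightarrow> \<phi> 0 i = 1"
    and init_y: "\<And>i. i < I \<Longrightarrow> y 0 i = gradf i (x 0 i)"
    and step_xt_mem: "\<And>k i. i < I \<Longrightarrow> xt k i \<in> X"
    and step_xt_min: "\<And>k i z. i < I \<Longrightarrow> z \<in> X \<Longrightarrow>
        ft i (xt k i) (x k i) + inner (real I *\<^sub>R y k i - gradf i (x k i)) (xt k i - x k i) + G (xt k i)
        \<le> ft i z (x k i) + inner (real I *\<^sub>R y k i - gradf i (x k i)) (z - x k i) + G z"
    and step_xhalf: "\<And>k i. i < I \<Longrightarrow> xhalf k i = x k i + \<gamma> k *\<^sub>R (xt k i - x k i)"
    and step_phi: "\<And>k i. i < I \<Longrightarrow> \<phi> (Suc k) i = (\<Sum>j<I. A k i j * \<phi> k j)"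
    and step_x: "\<And>k i. i < I \<Longrightarrow>
        x (Suc k) i = (1 / \<phi> (Suc k) i) *\<^sub>R (\<Sum>j<I. (A k i j * \<phi> k j) *\<^sub>R xhalf k j)"
    and step_y: "\<And>k i. i < I \<Longrightarrow>
        y (Suc k) i = (1 / \<phi> (Suc k) i) *\<^sub>R (\<Sum>j<I. (A k i j * \<phi> k j) *\<^sub>R y k j)
                      + (1 / \<phi> (Suc k) i) *\<^sub>R (gradf i (x (Suc k) i) - gradf i (x k i))"
  shows "\<forall>i<I.
    let d = (\<lambda>k. norm (x k i - (1 / real I) *\<^sub>R (\<Sum>j<I. \<phi> k j *\<^sub>R x k j))) in
      (d \<longlonglongrightarrow> 0) \<and> summable (\<lambda>k. \<gamma> k * d k) \<and> summable (\<lambda>k. (d k)\<^sup>2)"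
proof (cases "I = 0")
  case False
  interpret sonata I X U gradf G L L_F L_G ft gradft tau \<gamma> E B A \<kappa> x xhalf xt y \<phi>
    using False by unfold_locales (use assms in auto)
  show ?thesis
    using consensus by (simp add: Let_def)
qed simp

end
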